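(* Let $s\geqslant1$. The Beth model $\mathcal{B}_s$ forces (at its root) the universal closures of all instances, with types $\leqslant s$, of the following axioms for lawless functionals ($1\leqslant n\leqslant s$): (LL1) $\exists\mathcal F^n(\forall y\leqslant x)(\mathcal F(y)=F^n(y))$; (LL2) $\mathcal F^n=\mathcal G^n\vee\mathcal F^n\neq\mathcal G^n$; (LL3) $\varphi(\mathcal H^n)\supset\exists x\forall\mathcal G^n[(\forall y<x)(\mathcal G(y)=\mathcal H(y))\supset\varphi(\mathcal G)]$, for every formula $\varphi$ of $LP_s$ with $sort(\varphi)\leqslant n$ having no free variables of type $n$ over non-lawlike functionals other than $\mathcal H^n$.
   Context: $sort(\varphi)$ is the maximal type of the free variables of $\varphi$ (0 if none); number variables have type 0, functional variables $F^n,A^n,\mathcal F^n$ have type $n$; non-lawlike variables of type $n$ are the $F^n$ and $\mathcal F^n$. Language $L_s$ ($s\geqslant1$). Variables: $x,y,z,\dots$ of type 0 (natural numbers); for $1\leqslant n\leqslant s$, variables $F^n,G^n,\dots$ (over $n$-functionals), $A^n,B^n,\dots$ (over lawlike $n$-functionals), $\mathcal{F}^n,\mathcal{G}^n,\dots$ (over lawless $n$-functionals). Constants $0$, $K^n$. Terms/$n$-functionals: number variables and $0$ are terms; type-$n$ variables and $K^n$ are $n$-functionals; $St,t+\tau,t\cdot\tau$ terms; $N^n(Z)$ an $n$-functional; $Z(t)=Ap^1(Z,t)$ a term for a 1-functional $Z$; $Z(t)=Ap^{n+1}(Z,t)$ an $n$-functional for an $(n+1)$-functional $Z$. Atomic formulas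 $t=_0\tau$, $Z=_nV$; formulas with $\bot,\wedge,\vee,\supset,\forall,\exists$, $\neg\varphi:=\varphi\supset\bot$. $LP_s$ adds atomic formulas $\vdash_z\varphi(\bar X)$ for terms $z$ and formulas $\varphi$ of $L_s$ with free variables in $\bar X$. Beth model $\mathcal{B}_s$. Path = maximal linearly ordered subset; path through $x$ = path containing $x$. $b^{(m)}$: length-$m$ sequences; $b^*$: finite sequences, $y\leqslant x$ iff $x$ is an initial segment of $y$. $a_0=\omega$, $d_0=\{\langle x\rangle:x\in\omega^*\}$, $\langle x\rangle\preccurlyeq_0\langle y\rangle$ iff $x\leqslant y$. For $k\geqslant1$: $a_k$ = partial $f:d_{k-1}\times\omega\dashrightarrow a_{k-1}$, monotonic ($y\preccurlyeq_{k-1}x\Rightarrow f(x,\cdot)\subseteq f(y,\cdot)$) and complete (for each path $S$ in $d_{k-1}$, $\bigcup_{x\in S}f(x,\cdot)$ total); $d_k=\bigcup_m a_0^{(m)}\times\dots\times a_k^{(m)}$, $x\preccurlyeq_ky$ iff $\langle x\rangle_i\leqslant\langle y\rangle_i$ for $i\leqslant k$, $lh(x)=m$. Nodes $M=d_{s-1}$, $\preccurlyeq=\preccurlyeq_{s-1}$, root $\varepsilon$; $\bar\alpha(k)=\langle\alpha_0,\dots,\alpha_{k-1}\rangle\in d_{k-1}$. Domains: $\omega$; $a_k$; $b_k=\{f\in a_k:f(\text{root},\cdot)\text{ total}\}$; $l_k=\{\nu_k(\xi):\xi\in c_k\}$, $c_k$ = maps $\xi:\omega\times a_{k-1}\to a_{k-1}$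 with each $\xi(n,\cdot)$ bijective, $\nu_k(\xi)(x,n)=\xi(n,\langle\langle x\rangle_{k-1}\rangle_n)$ if $n<lh(x)$, else undefined. Interpretations: $\widehat K^1(x,n)=0$, $\widehat K^{k+1}(x,n)=\widehat K^k$; usual $0,S,+,\cdot$; $N^k\mapsto S^k$ ($S^0(x)=x+1$, $S^{n+1}(f)=S^n\circ f$); at $\alpha$, $Ap^k(f,n)\mapsto f(\bar\alpha(k),n)$; $Z^{[\alpha]}$ is the possibly undefined value. $Val(\alpha,Z=_kV)=T$ iff both defined and equal; $Val(\alpha,\vdash_t\varphi)=T$ iff $t^{[\alpha]}$ defined and some $\gamma\succcurlyeq\alpha$ with $lh(\gamma)=t^{[\alpha]}$ forces $\varphi$. Forcing (Beth): atomic: every path through $\alpha$ meets $\beta$ with $Val=T$; $\alpha\not\Vdash\bot$; $\wedge$ componentwise; $\vee$ and $\exists$: every path through $\alpha$ meets a node forcing a disjunct / an instance $\psi(c)$; $\supset$: every $\beta\preccurlyeq\alpha$ forcing the antecedent forces the consequent; $\forall$: all instances forced at $\alpha$. $\mathcal B_s\Vdash\varphi$ iff $\varepsilon\Vdash\varphi$. *)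

theory Defs
  imports Main "HOL-Library.Sublist"
begin

section \<open>Syntax of L_s and LP_s\<close>

text \<open>Kinds of functional variables: Gen = F^n (arbitrary), Law = A^n (lawlike),
  Lls = calligraphic F^n (lawless).  A functional variable is FV kind type index.\<close>
datatype kind = Gen | Law | Lls

datatype trm = NV nat | Zero | Sc trm | Pl trm trm | Tm trm trm | Ap1 fnl trm
     and fnl = FV kind nat nat | KC nat | NS fnl | ApF fnl trm

text \<open>Prv t phi is the atomic formula  |-_t phi  of LP_s.\<close>
datatype frm = Bot | EqN trm trm | EqF fnl fnl
  | Cj frm frm | Dj frm frm | Im frm frm
  | AllN nat frm | ExN nat frm
  | AllF kind nat nat frm | ExF kind nat nat frm
  | Prv trm frm

definition Ng :: "frm \<Rightarrow> frm" where "Ng \<phi> = Im \<phi> Bot"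

primrec ty :: "fnl \<Rightarrow> nat" where
  "ty (FV k n i) = n"
| "ty (KC n) = n"
| "ty (NS Z) = ty Z"
| "ty (ApF Z t) = ty Z - 1"

primrec wfT :: "nat \<Rightarrow> trm \<Rightarrow> bool" and wfF :: "nat \<Rightarrow> fnl \<Rightarrow> bool" where
  "wfT s (NV i) = True"
| "wfT s Zero = True"
| "wfT s (Sc t) = wfT s t"
| "wfT s (Pl t u) = (wfT s t \<and> wfT s u)"
| "wfT s (Tm t u) = (wfT s t \<and> wfT s u)"
| "wfT s (Ap1 Z t) = (wfF s Z \<and> ty Z = 1 \<and> wfT s t)"
| "wfF s (FV k n i) = (1 \<le> n \<and> n \<le> s)"
| "wfF s (KC n) = (1 \<le> n \<and> n \<le> s)"
| "wfF s (NS Z) = wfF s Z"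
| "wfF s (ApF Z t) = (wfF s Z \<and> 2 \<le> ty Z \<and> wfT s t)"

primrec isL :: "frm \<Rightarrow> bool" where
  "isL Bot = True"
| "isL (EqN t u) = True"
| "isL (EqF Z V) = True"
| "isL (Cj a b) = (isL a \<and> isL b)"
| "isL (Dj a b) = (isL a \<and> isL b)"
| "isL (Im a b) = (isL a \<and> isL b)"
| "isL (AllN i a) = isL a"
| "isL (ExN i a) = isL a"
| "isL (AllF k n i a) = isL a"
| "isL (ExF k n i a) = isL a"
| "isL (Prv t a) = False"

primrec wfP :: "nat \<Rightarrow> frm \<Rightarrow> bool" where
  "wfP s Bot = True"
| "wfP s (EqN t u) = (wfT s t \<and> wfT s u)"
| "wfP s (EqF Z V) = (wfF s Z \<and> wfF s V \<and> ty Z = ty V)"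
| "wfP s (Cj a b) = (wfP s a \<and> wfP s b)"
| "wfP s (Dj a b) = (wfP s a \<and> wfP s b)"
| "wfP s (Im a b) = (wfP s a \<and> wfP s b)"
| "wfP s (AllN i a) = wfP s a"
| "wfP s (ExN i a) = wfP s a"
| "wfP s (AllF k n i a) = (1 \<le> n \<and> n \<le> s \<and> wfP s a)"
| "wfP s (ExF k n i a) = (1 \<le> n \<and> n \<le> s \<and> wfP s a)"
| "wfP s (Prv t a) = (wfT s t \<and> wfP s a \<and> isL a)"

primrec fvNT :: "trm \<Rightarrow> nat set" and fvNF :: "fnl \<Rightarrow> nat set" where
  "fvNT (NV i) = {i}"
| "fvNT Zero = {}"
| "fvNT (Sc t) = fvNT t"
| "fvNT (Pl t u) = fvNT t \<union> fvNT u"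
| "fvNT (Tm t u) = fvNT t \<union> fvNT u"
| "fvNT (Ap1 Z t) = fvNF Z \<union> fvNT t"
| "fvNF (FV k n i) = {}"
| "fvNF (KC n) = {}"
| "fvNF (NS Z) = fvNF Z"
| "fvNF (ApF Z t) = fvNF Z \<union> fvNT t"

primrec fvFT :: "trm \<Rightarrow> (kind \<times> nat \<times> nat) set"
    and fvFF :: "fnl \<Rightarrow> (kind \<times> nat \<times> nat) set" where
  "fvFT (NV i) = {}"
| "fvFT Zero = {}"
| "fvFT (Sc t) = fvFT t"
| "fvFT (Pl t u) = fvFT t \<union> fvFT u"
| "fvFT (Tm t u) = fvFT t \<union> fvFT u"
| "fvFT (Ap1 Z t) = fvFF Z \<union> fvFT t"
| "fvFF (FV k n i) = {(k, n, i)}"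
| "fvFF (KC n) = {}"
| "fvFF (NS Z) = fvFF Z"
| "fvFF (ApF Z t) = fvFF Z \<union> fvFT t"

primrec fvN :: "frm \<Rightarrow> nat set" where
  "fvN Bot = {}"
| "fvN (EqN t u) = fvNT t \<union> fvNT u"
| "fvN (EqF Z V) = fvNF Z \<union> fvNF V"
| "fvN (Cj a b) = fvN a \<union> fvN b"
| "fvN (Dj a b) = fvN a \<union> fvN b"
| "fvN (Im a b) = fvN a \<union> fvN b"
| "fvN (AllN i a) = fvN a - {i}"
| "fvN (ExN i a) = fvN a - {i}"
| "fvN (AllF k n i a) = fvN a"
| "fvN (ExF k n i a) = fvN a"
| "fvN (Prv t a) = fvNT t \<union> fvN a"

primrec fvF :: "frm \<Rightarrow> (kind \<times> nat \<times> nat) set" where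
  "fvF Bot = {}"
| "fvF (EqN t u) = fvFT t \<union> fvFT u"
| "fvF (EqF Z V) = fvFF Z \<union> fvFF V"
| "fvF (Cj a b) = fvF a \<union> fvF b"
| "fvF (Dj a b) = fvF a \<union> fvF b"
| "fvF (Im a b) = fvF a \<union> fvF b"
| "fvF (AllN i a) = fvF a"
| "fvF (ExN i a) = fvF a"
| "fvF (AllF k n i a) = fvF a - {(k, n, i)}"
| "fvF (ExF k n i a) = fvF a - {(k, n, i)}"
| "fvF (Prv t a) = fvFT t \<union> fvF a"

primrec allvF :: "frm \<Rightarrow> (kind \<times> nat \<times> nat) set" where
  "allvF Bot = {}"
| "allvF (EqN t u) = fvFT t \<union> fvFT u"
| "allvF (EqF Z V) = fvFF Z \<union> fvFF V"
| "allvF (Cj a b) = allvF a \<union> allvF b"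
| "allvF (Dj a b) = allvF a \<union> allvF b"
| "allvF (Im a b) = allvF a \<union> allvF b"
| "allvF (AllN i a) = allvF a"
| "allvF (ExN i a) = allvF a"
| "allvF (AllF k n i a) = insert (k, n, i) (allvF a)"
| "allvF (ExF k n i a) = insert (k, n, i) (allvF a)"
| "allvF (Prv t a) = fvFT t \<union> allvF a"

text \<open>sort(phi): maximal type of the free variables (0 if none; number variables have type 0)\<close>
definition sortf :: "frm \<Rightarrow> nat" where
  "sortf \<phi> = Max (insert 0 ((\<lambda>(k, m, i). m) ` fvF \<phi>))"

primrec substT :: "nat \<Rightarrow> nat \<Rightarrow> nat \<Rightarrow> trm \<Rightarrow> trm"
    and substF :: "nat \<Rightarrow> nat \<Rightarrow> nat \<Rightarrow> fnl \<Rightarrow> fnl" where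
  "substT n h g (NV i) = NV i"
| "substT n h g Zero = Zero"
| "substT n h g (Sc t) = Sc (substT n h g t)"
| "substT n h g (Pl t u) = Pl (substT n h g t) (substT n h g u)"
| "substT n h g (Tm t u) = Tm (substT n h g t) (substT n h g u)"
| "substT n h g (Ap1 Z t) = Ap1 (substF n h g Z) (substT n h g t)"
| "substF n h g (FV k m i) = (if k = Lls \<and> m = n \<and> i = h then FV Lls n g else FV k m i)"
| "substF n h g (KC m) = KC m"
| "substF n h g (NS Z) = NS (substF n h g Z)"
| "substF n h g (ApF Z t) = ApF (substF n h g Z) (substT n h g t)"

primrec substL :: "nat \<Rightarrow> nat \<Rightarrow> nat \<Rightarrow> frm \<Rightarrow> frm" where
  "substL n h g Bot = Bot"
| "substL n h g (EqN t u) = EqN (substT n h g t) (substT n h g u)"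
| "substL n h g (EqF Z V) = EqF (substF n h g Z) (substF n h g V)"
| "substL n h g (Cj a b) = Cj (substL n h g a) (substL n h g b)"
| "substL n h g (Dj a b) = Dj (substL n h g a) (substL n h g b)"
| "substL n h g (Im a b) = Im (substL n h g a) (substL n h g b)"
| "substL n h g (AllN i a) = AllN i (substL n h g a)"
| "substL n h g (ExN i a) = ExN i (substL n h g a)"
| "substL n h g (AllF k m i a) =
     (if (k, m, i) = (Lls, n, h) then AllF k m i a else AllF k m i (substL n h g a))"
| "substL n h g (ExF k m i a) =
     (if (k, m, i) = (Lls, n, h) then ExF k m i a else ExF k m i (substL n h g a))"
| "substL n h g (Prv t a) = Prv (substT n h g t) (substL n h g a)"

text \<open>Bounded quantifiers: (\<forall>y\<le>x) phi := \<forall>y (\<exists>z (y+z=x) \<supset> phi),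
  (\<forall>y<x) phi := \<forall>y (\<exists>z (y+Sz=x) \<supset> phi), with z := x+y+1 (distinct from x,y;
  its scope is only the antecedent).\<close>
definition all_le :: "nat \<Rightarrow> nat \<Rightarrow> frm \<Rightarrow> frm" where
  "all_le y x \<phi> = AllN y (Im (ExN (Suc (x + y)) (EqN (Pl (NV y) (NV (Suc (x + y)))) (NV x))) \<phi>)"

definition all_lt :: "nat \<Rightarrow> nat \<Rightarrow> frm \<Rightarrow> frm" where
  "all_lt y x \<phi> = AllN y (Im (ExN (Suc (x + y)) (EqN (Pl (NV y) (Sc (NV (Suc (x + y))))) (NV x))) \<phi>)"

definition appEq :: "nat \<Rightarrow> fnl \<Rightarrow> fnl \<Rightarrow> nat \<Rightarrow> frm" where
  "appEq n Z V y = (if n = 1 then EqN (Ap1 Z (NV y)) (Ap1 V (NV y))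
                    else EqF (ApF Z (NV y)) (ApF V (NV y)))"

definition LL1 :: "nat \<Rightarrow> nat \<Rightarrow> nat \<Rightarrow> nat \<Rightarrow> nat \<Rightarrow> frm" where
  "LL1 n x y i j = ExF Lls n j (all_le y x (appEq n (FV Lls n j) (FV Gen n i) y))"

definition LL2 :: "nat \<Rightarrow> nat \<Rightarrow> nat \<Rightarrow> frm" where
  "LL2 n i j = Dj (EqF (FV Lls n i) (FV Lls n j)) (Ng (EqF (FV Lls n i) (FV Lls n j)))"

definition LL3 :: "nat \<Rightarrow> frm \<Rightarrow> nat \<Rightarrow> nat \<Rightarrow> nat \<Rightarrow> nat \<Rightarrow> frm" where
  "LL3 n \<phi> h g x y = Im \<phi> (ExN x (AllF Lls n g
      (Im (all_lt y x (appEq n (FV Lls n g) (FV Lls n h) y)) (substL n h g \<phi>))))"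

section \<open>The Beth model B_s\<close>

text \<open>Nodes of d_k are tuples (x_0,...,x_k) of sequences of a common length m, x_i over a_i;
  represented as lists of k+1 lists.  DD As is d_k where As = [a_0,...,a_k].\<close>
definition DD :: "'u set list \<Rightarrow> 'u list list set" where
  "DD As = {x. length x = length As \<and>
      (\<exists>m. \<forall>i<length As. length (x ! i) = m \<and> set (x ! i) \<subseteq> As ! i)}"

text \<open>x \<preceq> y iff each component of y is an initial segment of the component of x\<close>
definition prec :: "'u list list \<Rightarrow> 'u list list \<Rightarrow> bool" where
  "prec x y \<longleftrightarrow> length x = length y \<and> (\<forall>i<length x. prefix (y ! i) (x ! i))"

definition linset :: "('a \<Rightarrow> 'a \<Rightarrow> bool) \<Rightarrow> 'a set \<Rightarrow> bool" where
  "linset r Q \<longleftrightarrow> (\<forall>x\<in>Q. \<forall>y\<in>Q. r x y \<or> r y x)"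

definition is_path :: "'a set \<Rightarrow> ('a \<Rightarrow> 'a \<Rightarrow> bool) \<Rightarrow> 'a set \<Rightarrow> bool" where
  "is_path S r P \<longleftrightarrow> P \<subseteq> S \<and> linset r P \<and>
      (\<forall>Q. Q \<subseteq> S \<and> linset r Q \<and> P \<subseteq> Q \<longrightarrow> Q = P)"

text \<open>Raw As: the monotonic complete partial maps d_{k-1} \<times> \<omega> -> a_{k-1}, As = [a_0..a_{k-1}]
  (a partial map is a total HOL function into option, None outside d_{k-1}).\<close>
definition Raw :: "'u set list \<Rightarrow> ('u list list \<times> nat \<Rightarrow> 'u option) set" where
  "Raw As = {f. (\<forall>x n. x \<notin> DD As \<longrightarrow> f (x, n) = None)
      \<and> (\<forall>x n v. f (x, n) = Some v \<longrightarrow> v \<in> last As)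
      \<and> (\<forall>x\<in>DD As. \<forall>y\<in>DD As. prec y x \<longrightarrow> (\<forall>n v. f (x, n) = Some v \<longrightarrow> f (y, n) = Some v))
      \<and> (\<forall>P. is_path (DD As) prec P \<longrightarrow> (\<forall>n. \<exists>x\<in>P. f (x, n) \<noteq> None))}"

definition LRaw :: "'u set list \<Rightarrow> ('u list list \<times> nat \<Rightarrow> 'u option) set" where
  "LRaw As = {(\<lambda>(x, n). if x \<in> DD As \<and> n < length (hd x) then Some (\<xi> n (last x ! n)) else None)
      | \<xi>. \<forall>n. bij_betw (\<xi> n) (last As) (last As)}"

type_synonym 'u env = "(nat \<Rightarrow> nat) \<times> (kind \<Rightarrow> nat \<Rightarrow> nat \<Rightarrow> 'u)"

text \<open>The model is built inside a universe type 'u: numbers are coded by num, and an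
  n-functional f (n \<ge> 1) is coded by enc f.  The main theorem assumes these codings injective.\<close>
locale beth =
  fixes num :: "nat \<Rightarrow> 'u"
    and enc :: "('u list list \<times> nat \<Rightarrow> 'u option) \<Rightarrow> 'u"
    and s :: nat
begin

fun As :: "nat \<Rightarrow> 'u set list" where
  "As 0 = [range num]"
| "As (Suc k) = As k @ [enc ` Raw (As k)]"

definition A :: "nat \<Rightarrow> 'u set" where "A k = As k ! k"
definition D :: "nat \<Rightarrow> 'u list list set" where "D k = DD (As k)"

definition B :: "nat \<Rightarrow> 'u set" where
  "B k = enc ` {f \<in> Raw (As (k - 1)). \<forall>n. f (replicate k [], n) \<noteq> None}"
definition L :: "nat \<Rightarrow> 'u set" where
  "L k = enc ` LRaw (As (k - 1))"

definition Univ :: "('u list list \<times> nat \<Rightarrow> 'u option) set" where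
  "Univ = (\<Union>k\<in>{1..s}. Raw (As (k - 1)) \<union> LRaw (As (k - 1)))"

definition dec :: "'u \<Rightarrow> ('u list list \<times> nat \<Rightarrow> 'u option)" where
  "dec u = inv_into Univ enc u"

definition M :: "'u list list set" where "M = D (s - 1)"
definition root :: "'u list list" where "root = replicate s []"

fun Kc :: "nat \<Rightarrow> 'u" where
  "Kc 0 = num 0"
| "Kc (Suc k) = enc (\<lambda>(x, m). if x \<in> D k then Some (Kc k) else None)"

fun Sop :: "nat \<Rightarrow> 'u \<Rightarrow> 'u" where
  "Sop 0 u = num (inv num u + 1)"
| "Sop (Suc k) u = enc (\<lambda>p. map_option (Sop k) (dec u p))"

primrec evT :: "'u env \<Rightarrow> 'u list list \<Rightarrow> trm \<Rightarrow> nat option"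
    and evF :: "'u env \<Rightarrow> 'u list list \<Rightarrow> fnl \<Rightarrow> 'u option" where
  "evT \<rho> \<alpha> (NV i) = Some (fst \<rho> i)"
| "evT \<rho> \<alpha> Zero = Some 0"
| "evT \<rho> \<alpha> (Sc t) = map_option Suc (evT \<rho> \<alpha> t)"
| "evT \<rho> \<alpha> (Pl t u) = (case (evT \<rho> \<alpha> t, evT \<rho> \<alpha> u) of
      (Some a, Some b) \<Rightarrow> Some (a + b) | _ \<Rightarrow> None)"
| "evT \<rho> \<alpha> (Tm t u) = (case (evT \<rho> \<alpha> t, evT \<rho> \<alpha> u) of
      (Some a, Some b) \<Rightarrow> Some (a * b) | _ \<Rightarrow> None)"
| "evT \<rho> \<alpha> (Ap1 Z t) = (case (evF \<rho> \<alpha> Z, evT \<rho> \<alpha> t) of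
      (Some f, Some n) \<Rightarrow> map_option (inv num) (dec f (take 1 \<alpha>, n)) | _ \<Rightarrow> None)"
| "evF \<rho> \<alpha> (FV k n i) = Some (snd \<rho> k n i)"
| "evF \<rho> \<alpha> (KC n) = Some (Kc n)"
| "evF \<rho> \<alpha> (NS Z) = map_option (Sop (ty Z)) (evF \<rho> \<alpha> Z)"
| "evF \<rho> \<alpha> (ApF Z t) = (case (evF \<rho> \<alpha> Z, evT \<rho> \<alpha> t) of
      (Some f, Some n) \<Rightarrow> dec f (take (ty Z) \<alpha>, n) | _ \<Rightarrow> None)"

fun Dom :: "kind \<Rightarrow> nat \<Rightarrow> 'u set" where
  "Dom Gen n = A n"
| "Dom Law n = B n"
| "Dom Lls n = L n"

definition updN :: "'u env \<Rightarrow> nat \<Rightarrow> nat \<Rightarrow> 'u env" where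
  "updN \<rho> i c = ((fst \<rho>)(i := c), snd \<rho>)"
definition updF :: "'u env \<Rightarrow> kind \<Rightarrow> nat \<Rightarrow> nat \<Rightarrow> 'u \<Rightarrow> 'u env" where
  "updF \<rho> k n i c = (fst \<rho>, (snd \<rho>)(k := (snd \<rho> k)(n := (snd \<rho> k n)(i := c))))"

definition thru :: "'u list list \<Rightarrow> 'u list list set set" where
  "thru \<alpha> = {P. is_path M prec P \<and> \<alpha> \<in> P}"

primrec frc :: "frm \<Rightarrow> 'u env \<Rightarrow> 'u list list \<Rightarrow> bool" where
  "frc Bot \<rho> \<alpha> = False"
| "frc (EqN t u) \<rho> \<alpha> = (\<forall>P\<in>thru \<alpha>. \<exists>\<beta>\<in>P.
      evT \<rho> \<beta> t \<noteq> None \<and> evT \<rho> \<beta> t = evT \<rho> \<beta> u)"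
| "frc (EqF Z V) \<rho> \<alpha> = (\<forall>P\<in>thru \<alpha>. \<exists>\<beta>\<in>P.
      evF \<rho> \<beta> Z \<noteq> None \<and> evF \<rho> \<beta> Z = evF \<rho> \<beta> V)"
| "frc (Cj a b) \<rho> \<alpha> = (frc a \<rho> \<alpha> \<and> frc b \<rho> \<alpha>)"
| "frc (Dj a b) \<rho> \<alpha> = (\<forall>P\<in>thru \<alpha>. \<exists>\<beta>\<in>P. frc a \<rho> \<beta> \<or> frc b \<rho> \<beta>)"
| "frc (Im a b) \<rho> \<alpha> = (\<forall>\<beta>\<in>M. prec \<beta> \<alpha> \<longrightarrow> frc a \<rho> \<beta> \<longrightarrow> frc b \<rho> \<beta>)"
| "frc (AllN i a) \<rho> \<alpha> = (\<forall>c. frc a (updN \<rho> i c) \<alpha>)"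
| "frc (ExN i a) \<rho> \<alpha> = (\<forall>P\<in>thru \<alpha>. \<exists>\<beta>\<in>P. \<exists>c. frc a (updN \<rho> i c) \<beta>)"
| "frc (AllF k n i a) \<rho> \<alpha> = (\<forall>c\<in>Dom k n. frc a (updF \<rho> k n i c) \<alpha>)"
| "frc (ExF k n i a) \<rho> \<alpha> = (\<forall>P\<in>thru \<alpha>. \<exists>\<beta>\<in>P. \<exists>c\<in>Dom k n. frc a (updF \<rho> k n i c) \<beta>)"
| "frc (Prv t a) \<rho> \<alpha> = (\<forall>P\<in>thru \<alpha>. \<exists>\<beta>\<in>P.
      (case evT \<rho> \<beta> t of None \<Rightarrow> False
       | Some m \<Rightarrow> (\<exists>\<gamma>\<in>M. prec \<beta> \<gamma> \<and> length (hd \<gamma>) = m \<and> frc a \<rho> \<gamma>)))"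

definition envOK :: "'u env \<Rightarrow> bool" where
  "envOK \<rho> \<longleftrightarrow> (\<forall>k n i. 1 \<le> n \<and> n \<le> s \<longrightarrow> snd \<rho> k n i \<in> Dom k n)"

definition forces_closure :: "frm \<Rightarrow> bool" where
  "forces_closure \<phi> \<longleftrightarrow> (\<forall>\<rho>. envOK \<rho> \<longrightarrow> frc \<phi> \<rho> root)"

end

end

theory Submission
  imports Defs "HOL-Combinatorics.Transposition"
begin

(*
  LL2 is immediate: two lawless variables denote fixed functionals, which are
  either equal (so equality is forced everywhere) or distinct (so equality is
  forced nowhere and its negation is forced).

  LL1 and LL3 rest on the tree structure of the nodes.  Nodes are tuples of
  finite sequences of a common length lh; along every path lh takes every value
  and every functional of type n becomes defined at every argument.
  LL1: given F of type n and a bound X, some node beta on each path already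
  determines F(0),...,F(X); the lawless functional nu(xi), with xi_y the
  transposition exchanging beta's y-th entry with the value F(y), agrees with F
  there.
  LL3 is the heart of the matter: relabelling the n-th coordinate of all nodes
  by a family of bijections sigma induces an automorphism ("transport") of the
  whole model: of the node order, of all domains a_k, b_k, l_k, and of the
  interpretation of terms.  Forcing is invariant under it (forces_transport).
  If H = nu(xi) and G = nu(zeta) agree below lh beta at beta, a suitable
  relabelling fixes beta, fixes every lawlike functional of type n and all
  functionals of type < n, and maps H to G; hence phi(H) forced at beta gives
  phi(G) forced at beta, and by monotonicity at all extensions.
*)

(* The level of a node: the common length of its component sequences. *)
definition lh :: "'a list list \<Rightarrow> nat" where "lh x = length (hd x)"

lemma DD_iff:
  assumes "As \<noteq> []"
  shows "x \<in> DD As \<longleftrightarrow> length x = length As \<and> (\<forall>i<length As. length (x!i) = lh x \<and> set (x!i) \<subseteq> As!i)"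
proof
  assume "x \<in> DD As"
  then obtain m where "length x = length As" "\<forall>i<length As. length (x ! i) = m \<and> set (x ! i) \<subseteq> As ! i"
    unfolding DD_def by auto
  moreover have "lh x = m" using calculation assms unfolding lh_def
    by (metis hd_conv_nth length_greater_0_conv list.size(3))
  ultimately show "length x = length As \<and> (\<forall>i<length As. length (x!i) = lh x \<and> set (x!i) \<subseteq> As!i)" by auto
qed (auto simp: DD_def)

lemma prec_refl: "prec x x" by (simp add: prec_def)
lemma prec_trans: "prec z y \<Longrightarrow> prec y x \<Longrightarrow> prec z x"
  unfolding prec_def by (metis prefix_order.order_trans)

lemma prefix_take_take: "a \<le> b \<Longrightarrow> prefix (take a l) (take b l)"
  by (metis min.absorb1 take_is_prefix take_take)

lemma prec_lh:
  assumes "As \<noteq> []" "x \<in> DD As" "y \<in> DD As" "prec y x" shows "lh x \<le> lh y"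
proof -
  have "0 < length As" using assms by simp
  then have "prefix (x!0) (y!0)" using assms(2-4) by (auto simp: prec_def DD_iff)
  then have "length (x!0) \<le> length (y!0)" by (rule prefix_length_le)
  then show ?thesis using assms \<open>0 < length As\<close> by (auto simp: DD_iff)
qed

lemma prec_take:
  assumes "As \<noteq> []" "x \<in> DD As" "y \<in> DD As" "prec y x" shows "x = map (take (lh x)) y"
proof (rule nth_equalityI)
  show "length x = length (map (take (lh x)) y)" using assms by (auto simp: DD_iff)
  fix i assume "i < length x"
  then have "prefix (x!i) (y!i)" "length (x!i) = lh x" "i < length y" using assms by (auto simp: prec_def DD_iff)
  then show "x ! i = map (take (lh x)) y ! i"
    by (metis append_eq_conv_conj nth_map prefix_def)
qed

lemma prec_eq:
  assumes "As \<noteq> []" "x \<in> DD As" "y \<in> DD As" "prec y x" "lh x = lh y" shows "x = y"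
proof -
  have "x = map (take (lh y)) y" using prec_take[OF assms(1-4)] assms(5) by simp
  also have "\<dots> = y" using assms(1,3) by (auto intro!: nth_equalityI simp: DD_iff)
  finally show ?thesis .
qed

lemma prec_of_take:
  assumes "As \<noteq> []" "y \<in> DD As" "l \<le> lh y"
  shows "map (take l) y \<in> DD As" "prec y (map (take l) y)" "lh (map (take l) y) = l"
proof -
  have len: "length y = length As" "\<forall>i<length As. length (y!i) = lh y \<and> set (y!i) \<subseteq> As!i"
    using assms by (auto simp: DD_iff)
  have lhm: "lh (map (take l) y) = l" using len assms unfolding lh_def
    by (metis hd_conv_nth hd_map length_greater_0_conv lh_def list.map_disc_iff min.absorb2 length_take)
  show "lh (map (take l) y) = l" by fact
  show "map (take l) y \<in> DD As" using len assms lhm unfolding DD_iff[OF assms(1)]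
    by (auto dest: in_set_takeD)
  show "prec y (map (take l) y)" using len by (auto simp: prec_def take_is_prefix)
qed

lemma prec_lin:
  assumes "As \<noteq> []" "x \<in> DD As" "x' \<in> DD As" "y \<in> DD As" "prec y x" "prec y x'"
  shows "prec x x' \<or> prec x' x"
proof -
  have e1: "x = map (take (lh x)) y" and e2: "x' = map (take (lh x')) y" using prec_take assms by blast+
  show ?thesis
  proof (cases "lh x \<le> lh x'")
    case True
    then have "prec x' x" by (subst e1, subst e2) (auto simp: prec_def prefix_take_take)
    then show ?thesis ..
  next
    case False
    then have "prec x x'" by (subst e1, subst e2) (auto simp: prec_def prefix_take_take)
    then show ?thesis ..
  qed
qed


lemma root_DD: "As \<noteq> [] \<Longrightarrow> replicate (length As) [] \<in> DD As"
  by (auto simp: DD_def)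

lemma prec_root: "As \<noteq> [] \<Longrightarrow> y \<in> DD As \<Longrightarrow> prec y (replicate (length As) [])"
  by (auto simp: prec_def DD_def)

lemma ext_node:
  assumes "As \<noteq> []" "\<forall>i<length As. As!i \<noteq> {}" "y \<in> DD As"
  shows "\<exists>y'\<in>DD As. prec y' y \<and> lh y' = Suc (lh y)"
proof -
  define p where "p i = (SOME a. a \<in> As!i)" for i
  have p: "i < length As \<Longrightarrow> p i \<in> As!i" for i using assms(2) unfolding p_def by (simp add: some_in_eq)
  define y' where "y' = map (\<lambda>i. y!i @ [p i]) [0..<length y]"
  have len: "length y = length As" "\<forall>i<length As. length (y!i) = lh y \<and> set (y!i) \<subseteq> As!i"
    using assms by (auto simp: DD_iff)
  have lhy': "lh y' = Suc (lh y)" unfolding y'_def lh_def using len assms(1)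
    by (simp add: hd_map lh_def hd_conv_nth)
  have "y' \<in> DD As" unfolding DD_iff[OF assms(1)] lhy' using len p by (auto simp: y'_def)
  moreover have "prec y' y" using len by (auto simp: y'_def prec_def)
  ultimately show ?thesis using lhy' by blast
qed

lemma linset_insert: "linset r (insert a Q) \<longleftrightarrow> r a a \<and> (\<forall>x\<in>Q. r a x \<or> r x a) \<and> linset r Q"
  unfolding linset_def by blast

lemma path_sub: "is_path S r P \<Longrightarrow> P \<subseteq> S" by (simp add: is_path_def)
lemma path_lin: "is_path S r P \<Longrightarrow> x \<in> P \<Longrightarrow> y \<in> P \<Longrightarrow> r x y \<or> r y x" by (simp add: is_path_def linset_def)

lemma path_ins:
  assumes "is_path S r P" "a \<in> S" "r a a" "\<forall>x\<in>P. r a x \<or> r x a" shows "a \<in> P"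
proof -
  have "insert a P = P" using assms unfolding is_path_def
    by (metis insert_subset linset_insert subset_insertI)
  then show ?thesis by blast
qed

lemma path_closed:
  assumes "As \<noteq> []" "is_path (DD As) prec P" "y \<in> P" "x \<in> DD As" "prec y x"
  shows "x \<in> P"
proof (rule path_ins[OF assms(2,4) prec_refl], intro ballI)
  fix e assume e: "e \<in> P"
  have eD: "e \<in> DD As" "y \<in> DD As" using e assms path_sub by blast+
  from path_lin[OF assms(2) e assms(3)] show "prec x e \<or> prec e x"
  proof
    assume "prec e y" then show ?thesis using assms(5) prec_trans by blast
  next
    assume "prec y e" then show ?thesis using prec_lin[OF assms(1) assms(4) eD(1) eD(2) assms(5)] by blast
  qed
qed

lemma path_nonempty:
  assumes "As \<noteq> []" "is_path (DD As) prec P" shows "replicate (length As) [] \<in> P"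
  using path_ins[OF assms(2) root_DD[OF assms(1)] prec_refl] prec_root[OF assms(1)] path_sub[OF assms(2)]
  by blast

(* Paths are unbounded in level; otherwise the maximal node could be extended. *)
lemma path_lh_ge:
  assumes "As \<noteq> []" "\<forall>i<length As. As!i \<noteq> {}" "is_path (DD As) prec P"
  shows "\<exists>x\<in>P. m \<le> lh x"
proof (rule ccontr)
  assume "\<not> ?thesis"
  then have small: "\<forall>x\<in>P. lh x < m" by auto
  have PD: "P \<subseteq> DD As" using assms path_sub by blast
  have inj: "inj_on lh P"
  proof
    fix x y assume "x \<in> P" "y \<in> P" "lh x = lh y"
    moreover have "x \<in> DD As" "y \<in> DD As" using PD calculation by auto
    ultimately show "x = y" using path_lin[OF assms(3)] prec_eq[OF assms(1)] by metis
  qed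
  have "lh ` P \<subseteq> {..<m}" using small by auto
  then have fin: "finite P" using inj finite_lessThan finite_subset finite_imageD by blast
  have ne: "P \<noteq> {}" using path_nonempty[OF assms(1,3)] by blast
  have fl: "finite (lh ` P)" "lh ` P \<noteq> {}" using fin ne by auto
  obtain x where x0: "x \<in> P" "lh x = Max (lh ` P)" using Max_in[OF fl] by (auto simp: image_iff)
  have x: "x \<in> P" "\<forall>z\<in>P. lh z \<le> lh x" using x0 fl(1) by auto
  obtain x' where x': "x' \<in> DD As" "prec x' x" "lh x' = Suc (lh x)" using ext_node[OF assms(1,2)] x PD by blast
  have "x' \<in> P"
  proof (rule path_ins[OF assms(3) x'(1) prec_refl], intro ballI)
    fix e assume e: "e \<in> P"
    from path_lin[OF assms(3) e x(1)] show "prec x' e \<or> prec e x'"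
    proof
      assume "prec e x"
      moreover have "e \<in> DD As" "x \<in> DD As" using e x PD by auto
      ultimately have "lh x \<le> lh e" using prec_lh[OF assms(1)] by blast
      then have "lh e = lh x" using x e by (simp add: le_antisym)
      then have "e = x" using prec_eq[OF assms(1)] \<open>prec e x\<close> \<open>e \<in> DD As\<close> \<open>x \<in> DD As\<close> by metis
      then show ?thesis using x' by auto
    next
      assume "prec x e" then show ?thesis using x' prec_trans by blast
    qed
  qed
  then show False using x x' by fastforce
qed

(* Every path meets every level (truncate a higher node on it). *)
lemma path_lh:
  assumes "As \<noteq> []" "\<forall>i<length As. As!i \<noteq> {}" "is_path (DD As) prec P"
  shows "\<exists>x\<in>P. lh x = m"
proof -
  obtain y where y: "y \<in> P" "m \<le> lh y" using path_lh_ge[OF assms] by blast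
  have yD: "y \<in> DD As" using y assms path_sub by blast
  have "map (take m) y \<in> P" using path_closed[OF assms(1,3) y(1)] prec_of_take[OF assms(1) yD y(2)] by blast
  then show ?thesis using prec_of_take[OF assms(1) yD y(2)] by blast
qed

lemma path_image:
  assumes P: "is_path S r P" and hS: "\<And>x. x\<in>S \<Longrightarrow> h x \<in> S" and h'S: "\<And>x. x\<in>S \<Longrightarrow> h' x \<in> S"
    and hh': "\<And>x. x\<in>S \<Longrightarrow> h (h' x) = x" and h'h: "\<And>x. x\<in>S \<Longrightarrow> h' (h x) = x"
    and hr: "\<And>x y. x\<in>S \<Longrightarrow> y\<in>S \<Longrightarrow> r x y \<Longrightarrow> r (h x) (h y)"
    and h'r: "\<And>x y. x\<in>S \<Longrightarrow> y\<in>S \<Longrightarrow> r x y \<Longrightarrow> r (h' x) (h' y)"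
  shows "is_path S r (h ` P)"
  unfolding is_path_def
proof (intro conjI allI impI)
  have PS: "P \<subseteq> S" using P path_sub by blast
  show "h ` P \<subseteq> S" using PS hS by auto
  show "linset r (h ` P)" unfolding linset_def
  proof (intro ballI)
    fix a b assume "a \<in> h ` P" "b \<in> h ` P"
    then obtain x y where xy: "x \<in> P" "y \<in> P" "a = h x" "b = h y" by blast
    have "r x y \<or> r y x" using path_lin[OF P xy(1,2)] .
    moreover have "x \<in> S" "y \<in> S" using xy PS by auto
    ultimately show "r a b \<or> r b a" using hr xy(3,4) by metis
  qed
  fix Q assume Q: "Q \<subseteq> S \<and> linset r Q \<and> h ` P \<subseteq> Q"
  have "h' ` Q \<subseteq> S" using Q h'S by auto
  moreover have "linset r (h' ` Q)" unfolding linset_def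
  proof (intro ballI)
    fix a b assume "a \<in> h' ` Q" "b \<in> h' ` Q"
    then obtain x y where xy: "x \<in> Q" "y \<in> Q" "a = h' x" "b = h' y" by blast
    have "r x y \<or> r y x" using Q xy unfolding linset_def by blast
    moreover have "x \<in> S" "y \<in> S" using xy Q by auto
    ultimately show "r a b \<or> r b a" using h'r xy(3,4) by metis
  qed
  moreover have "P \<subseteq> h' ` Q"
  proof
    fix x assume x: "x \<in> P"
    then have "h x \<in> Q" using Q by auto
    moreover have "h' (h x) = x" using x PS h'h by auto
    ultimately show "x \<in> h' ` Q" by (metis imageI)
  qed
  ultimately have e: "h' ` Q = P" using P Q unfolding is_path_def by blast
  show "Q = h ` P"
  proof
    show "Q \<subseteq> h ` P"
    proof
      fix q assume q: "q \<in> Q"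
      then have "h' q \<in> P" using e by auto
      moreover have "h (h' q) = q" using q Q hh' by auto
      ultimately show "q \<in> h ` P" by (metis imageI)
    qed
  qed (use Q in blast)
qed

lemma path_lower_bound:
  assumes P: "is_path S prec P" and F: "finite F" "F \<noteq> {}" "F \<subseteq> P"
  shows "\<exists>\<beta>\<in>P. \<forall>e\<in>F. prec \<beta> e"
  using F
proof (induction F rule: finite_ne_induct)
  case (singleton e)
  then show ?case using prec_refl by blast
next
  case (insert e F)
  then obtain \<beta> where \<beta>: "\<beta> \<in> P" "\<forall>e'\<in>F. prec \<beta> e'" by blast
  have "e \<in> P" using insert.prems by blast
  from path_lin[OF P this \<beta>(1)] show ?case
  proof
    assume "prec e \<beta>" then show ?thesis using \<beta> \<open>e \<in> P\<close> prec_refl prec_trans by blast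
  next
    assume "prec \<beta> e" then show ?thesis using \<beta> by blast
  qed
qed


(* Induction over functionals alone (terms need no invariant). *)
lemmas fnl_induct[case_names NV Zero Sc Pl Tm Ap1 FV KC NS ApF] =
  trm_fnl.induct[where ?P1.0="\<lambda>_. True", THEN conjunct2]

lemma wf_ty: "wfF s Z \<Longrightarrow> 1 \<le> ty Z \<and> ty Z \<le> s"
  by (induction Z rule: fnl_induct) auto

lemma fvF_allvF: "fvF \<phi> \<subseteq> allvF \<phi>"
  by (induction \<phi>) auto

lemma RawI:
  assumes "\<And>x n. x \<notin> DD Bs \<Longrightarrow> f (x, n) = None"
    "\<And>x n v. f (x, n) = Some v \<Longrightarrow> v \<in> last Bs"
    "\<And>x y n v. x \<in> DD Bs \<Longrightarrow> y \<in> DD Bs \<Longrightarrow> prec y x \<Longrightarrow> f (x, n) = Some v \<Longrightarrow> f (y, n) = Some v"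
    "\<And>P n. is_path (DD Bs) prec P \<Longrightarrow> \<exists>x\<in>P. f (x, n) \<noteq> None"
  shows "f \<in> Raw Bs"
  using assms unfolding Raw_def by blast

lemma RawD:
  assumes "f \<in> Raw Bs"
  shows "\<And>x n. x \<notin> DD Bs \<Longrightarrow> f (x, n) = None"
    "\<And>x n v. f (x, n) = Some v \<Longrightarrow> v \<in> last Bs"
    "\<And>x y n v. x \<in> DD Bs \<Longrightarrow> y \<in> DD Bs \<Longrightarrow> prec y x \<Longrightarrow> f (x, n) = Some v \<Longrightarrow> f (y, n) = Some v"
    "\<And>P n. is_path (DD Bs) prec P \<Longrightarrow> \<exists>x\<in>P. f (x, n) \<noteq> None"
  using assms unfolding Raw_def by blast+

lemma Raw_map:
  assumes f: "f \<in> Raw Bs" and Q: "\<And>v. v \<in> last Bs \<Longrightarrow> Q v \<in> last Bs"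
  shows "(\<lambda>p. map_option Q (f p)) \<in> Raw Bs"
proof (rule RawI)
  fix x n v assume "map_option Q (f (x, n)) = Some v"
  then obtain w where "f (x, n) = Some w" "v = Q w" by auto
  then show "v \<in> last Bs" using RawD(2)[OF f] Q by blast
next
  fix x y n v assume "x \<in> DD Bs" "y \<in> DD Bs" "prec y x" "map_option Q (f (x, n)) = Some v"
  then show "map_option Q (f (y, n)) = Some v" using RawD(3)[OF f] by fastforce
next
  fix P n assume "is_path (DD Bs) prec P"
  then show "\<exists>x\<in>P. map_option Q (f (x, n)) \<noteq> None" using RawD(4)[OF f] by auto
qed (use RawD(1)[OF f] in auto)

(* The constant map with value c on all nodes is monotonic and complete: every
   path passes through the root. *)
lemma Raw_const:
  assumes "Bs \<noteq> []" "c \<in> last Bs"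
  shows "(\<lambda>(x, m). if x \<in> DD Bs then Some c else None) \<in> Raw Bs"
proof (rule RawI)
  fix P n assume "is_path (DD Bs) prec P"
  then have "replicate (length Bs) [] \<in> P" by (rule path_nonempty[OF assms(1)])
  then show "\<exists>x\<in>P. (\<lambda>(x, m). if x \<in> DD Bs then Some c else None) (x, n) \<noteq> None"
    using root_DD[OF assms(1)] by auto
qed (use assms in \<open>auto split: if_splits\<close>)

locale beth_model = beth num enc s for num :: "nat \<Rightarrow> 'u" and enc and s +
  assumes s_pos: "1 \<le> s" and inj_enc: "inj_on enc Univ"
begin

lemma length_As[simp]: "length (As k) = Suc k"
  by (induction k) auto

lemma As_ne[simp]: "As k \<noteq> []"
  using length_As[of k] by (metis length_0_conv nat.distinct(1))

lemma As_nth0: "i \<le> k \<Longrightarrow> As k ! i = As i ! i"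
proof (induction k)
  case (Suc k)
  then show ?case by (cases "i = Suc k") (auto simp: nth_append)
qed simp

lemma As_nth: "i \<le> k \<Longrightarrow> As k ! i = A i"
  unfolding A_def by (rule As_nth0)

lemma last_As: "last (As k) = A k"
  by (simp add: last_conv_nth As_nth)

lemma A0: "A 0 = range num" by (simp add: A_def)
lemma A_Suc: "A (Suc k) = enc ` Raw (As k)"
  by (simp add: A_def nth_append)

lemma D_As: "D k = DD (As k)" by (simp add: D_def)

lemma DD_As_iff: "x \<in> DD (As k) \<longleftrightarrow> length x = Suc k \<and> (\<forall>i\<le>k. length (x!i) = lh x \<and> set (x!i) \<subseteq> A i)"
  by (auto simp: DD_iff As_nth less_Suc_eq_le)

lemma last_node: "x \<in> DD (As k) \<Longrightarrow> last x = x ! k"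
  by (metis DD_As_iff diff_Suc_1 last_conv_nth list.size(3) nat.distinct(1))

lemma Kc_A: "Kc k \<in> A k"
proof (induction k)
  case 0 then show ?case by (simp add: A0)
next
  case (Suc k)
  then have "(\<lambda>(x, m). if x \<in> D k then Some (Kc k) else None) \<in> Raw (As k)"
    using Raw_const[OF As_ne] by (simp add: D_As last_As)
  then show ?case by (simp add: A_Suc)
qed

lemma As_comp_ne: "\<forall>i<length (As k). As k ! i \<noteq> {}"
  using Kc_A by (auto simp: As_nth less_Suc_eq_le)

lemma path_lh_As: "is_path (DD (As k)) prec P \<Longrightarrow> \<exists>x\<in>P. lh x = m"
  by (rule path_lh[OF As_ne As_comp_ne])

lemma Raw_Univ: "1 \<le> k \<Longrightarrow> k \<le> s \<Longrightarrow> Raw (As (k - 1)) \<subseteq> Univ"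
  unfolding Univ_def by auto
lemma LRaw_Univ: "1 \<le> k \<Longrightarrow> k \<le> s \<Longrightarrow> LRaw (As (k - 1)) \<subseteq> Univ"
  unfolding Univ_def by auto

lemma dec_enc: "f \<in> Univ \<Longrightarrow> dec (enc f) = f"
  unfolding dec_def by (rule inv_into_f_f[OF inj_enc])

lemma A_dec:
  assumes "1 \<le> k" "k \<le> s" "u \<in> A k"
  shows "dec u \<in> Raw (As (k - 1))" "enc (dec u) = u"
proof -
  obtain j where j: "k = Suc j" using assms by (cases k) auto
  obtain f where f: "f \<in> Raw (As j)" "u = enc f" using assms(3) by (auto simp: j A_Suc)
  have "f \<in> Univ" using Raw_Univ[OF assms(1,2)] f j by auto
  then show "dec u \<in> Raw (As (k - 1))" "enc (dec u) = u" using f j dec_enc by auto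
qed

lemma node_len: "x \<in> DD (As k) \<Longrightarrow> length x = Suc k" by (simp add: DD_As_iff)

lemma node_entry_A:
  assumes "x \<in> DD (As k)" "i \<le> k" "c < lh x"
  shows "x ! i ! c \<in> A i"
  using assms by (auto simp: DD_As_iff) (metis nth_mem subsetD)

lemma node_entry:
  assumes "x \<in> DD (As k)" "y \<in> DD (As k)" "prec y x" "i \<le> k" "c < lh x"
  shows "y ! i ! c = x ! i ! c"
proof -
  have "x = map (take (lh x)) y" using prec_take[OF As_ne assms(1-3)] .
  then have "x ! i = take (lh x) (y ! i)" using assms(4) node_len[OF assms(2)] by (metis le_imp_less_Suc nth_map)
  then show ?thesis using assms(5) by simp
qed

definition nu :: "nat \<Rightarrow> (nat \<Rightarrow> 'u \<Rightarrow> 'u) \<Rightarrow> 'u list list \<times> nat \<Rightarrow> 'u option" where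
  "nu k \<xi> = (\<lambda>(x, m). if x \<in> DD (As k) \<and> m < length (hd x) then Some (\<xi> m (last x ! m)) else None)"

lemma LRaw_nu: "LRaw (As k) = {nu k \<xi> | \<xi>. \<forall>m. bij_betw (\<xi> m) (A k) (A k)}"
  by (simp add: LRaw_def nu_def last_As)

(* nu(xi) is monotonic and complete whenever each xi_m maps a_k into itself:
   entries are stable under extension, and paths reach every level. *)
lemma nu_Raw:
  assumes xi: "\<And>m e. e \<in> A k \<Longrightarrow> \<xi> m e \<in> A k"
  shows "nu k \<xi> \<in> Raw (As k)"
proof (rule RawI)
  fix x n v assume "nu k \<xi> (x, n) = Some v"
  then have xD: "x \<in> DD (As k)" "n < lh x" "v = \<xi> n (last x ! n)" by (auto simp: nu_def lh_def split: if_splits)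
  then show "v \<in> last (As k)" using xi node_entry_A[OF xD(1) le_refl xD(2)] last_node by (simp add: last_As)
next
  fix x y n v assume a: "x \<in> DD (As k)" "y \<in> DD (As k)" "prec y x" "nu k \<xi> (x, n) = Some v"
  then have n: "n < lh x" by (auto simp: nu_def lh_def split: if_splits)
  have "last y ! n = last x ! n" using node_entry[OF a(1-3) le_refl n] last_node a(1,2) by simp
  then show "nu k \<xi> (y, n) = Some v" using a n prec_lh[OF As_ne a(1-3)] by (auto simp: nu_def lh_def)
next
  fix P n assume P: "is_path (DD (As k)) prec P"
  then obtain x where "x \<in> P" "lh x = Suc n" using path_lh_As by blast
  moreover have "x \<in> DD (As k)" using calculation P path_sub by blast
  ultimately show "\<exists>x\<in>P. nu k \<xi> (x, n) \<noteq> None" by (auto simp: nu_def lh_def)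
qed (auto simp: nu_def)

lemma LRaw_Raw: "LRaw (As k) \<subseteq> Raw (As k)"
  unfolding LRaw_nu by (blast intro: nu_Raw bij_betw_apply)

lemma L_A: "1 \<le> k \<Longrightarrow> L k \<subseteq> A k"
  using LRaw_Raw by (cases k) (auto simp: L_def A_Suc)
lemma B_A: "1 \<le> k \<Longrightarrow> B k \<subseteq> A k"
  by (cases k) (auto simp: B_def A_Suc)

lemma Dom_A: "1 \<le> m \<Longrightarrow> Dom k m \<subseteq> A m"
  using L_A B_A by (cases k) (auto simp: A_def)

lemma L_elim:
  assumes "1 \<le> k" "k \<le> s" "c \<in> L k"
  obtains \<xi> where "\<forall>m. bij_betw (\<xi> m) (A (k - 1)) (A (k - 1))" "c = enc (nu (k - 1) \<xi>)" "dec c = nu (k - 1) \<xi>"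
proof -
  obtain \<xi> where xi: "\<forall>m. bij_betw (\<xi> m) (A (k - 1)) (A (k - 1))" "c = enc (nu (k - 1) \<xi>)"
    using assms by (auto simp: L_def LRaw_nu)
  then have "nu (k - 1) \<xi> \<in> Univ" using LRaw_Univ[OF assms(1,2)] LRaw_nu by blast
  then show ?thesis using that xi dec_enc by simp
qed

lemma nu_L:
  assumes "1 \<le> k" "\<forall>m. bij_betw (\<xi> m) (A (k - 1)) (A (k - 1))"
  shows "enc (nu (k - 1) \<xi>) \<in> L k"
  using assms by (auto simp: L_def LRaw_nu)

lemma M_As: "M = DD (As (s - 1))" by (simp add: M_def D_As)

lemma M_len: "x \<in> M \<Longrightarrow> length x = s" using s_pos by (simp add: M_As DD_As_iff)

lemma take_node:
  assumes "x \<in> DD (As k)" "j \<le> k"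
  shows "take (Suc j) x \<in> DD (As j)" "lh (take (Suc j) x) = lh x"
proof -
  have "x \<noteq> []" using node_len[OF assms(1)] by auto
  then have "lh (take (Suc j) x) = lh x" unfolding lh_def by (cases x) auto
  then show "take (Suc j) x \<in> DD (As j)" using assms by (auto simp: DD_As_iff)
  show "lh (take (Suc j) x) = lh x" by fact
qed

lemma take_prec: "prec y x \<Longrightarrow> prec (take j y) (take j x)"
  by (auto simp: prec_def)

lemma take_M:
  assumes "\<alpha> \<in> M" "1 \<le> k" "k \<le> s"
  shows "take k \<alpha> \<in> DD (As (k - 1))" "length (hd (take k \<alpha>)) = lh \<alpha>" "last (take k \<alpha>) = \<alpha> ! (k - 1)"
proof -
  have a: "\<alpha> \<in> DD (As (s - 1))" using assms by (simp add: M_As)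
  have k: "Suc (k - 1) = k" "k - 1 \<le> s - 1" using assms by auto
  show "take k \<alpha> \<in> DD (As (k - 1))" using take_node(1)[OF a k(2)] k by simp
  show "length (hd (take k \<alpha>)) = lh \<alpha>" using take_node(2)[OF a k(2)] k by (simp add: lh_def)
  have "length (take k \<alpha>) = k" using M_len[OF assms(1)] assms by simp
  then have "last (take k \<alpha>) = take k \<alpha> ! (k - 1)" using assms by (metis last_conv_nth list.size(3) not_one_le_zero)
  then show "last (take k \<alpha>) = \<alpha> ! (k - 1)" using assms by simp
qed

lemma nu_at:
  assumes "\<alpha> \<in> M" "1 \<le> k" "k \<le> s"
  shows "nu (k - 1) \<xi> (take k \<alpha>, c) = (if c < lh \<alpha> then Some (\<xi> c (\<alpha> ! (k - 1) ! c)) else None)"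
  using take_M[OF assms] by (simp add: nu_def)

lemma proj_path:
  assumes P: "is_path (DD (As k)) prec P" and j: "j \<le> k"
  shows "is_path (DD (As j)) prec (take (Suc j) ` P)"
  unfolding is_path_def
proof (intro conjI allI impI)
  have PS: "P \<subseteq> DD (As k)" using P path_sub by blast
  show "take (Suc j) ` P \<subseteq> DD (As j)" using PS take_node[OF _ j] by auto
  show "linset prec (take (Suc j) ` P)" unfolding linset_def
  proof (intro ballI)
    fix a b assume "a \<in> take (Suc j) ` P" "b \<in> take (Suc j) ` P"
    then obtain x y where "x \<in> P" "y \<in> P" "a = take (Suc j) x" "b = take (Suc j) y" by blast
    then show "prec a b \<or> prec b a" using path_lin[OF P] take_prec by metis
  qed
  fix Q assume Q: "Q \<subseteq> DD (As j) \<and> linset prec Q \<and> take (Suc j) ` P \<subseteq> Q"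
  show "Q = take (Suc j) ` P"
  proof
    show "Q \<subseteq> take (Suc j) ` P"
    proof
      fix q assume q: "q \<in> Q"
      obtain e where e: "e \<in> P" "lh e = lh q" using path_lh_As[OF P] by blast
      have eD: "e \<in> DD (As k)" using e PS by auto
      have te: "take (Suc j) e \<in> Q" using Q e by auto
      have "prec q (take (Suc j) e) \<or> prec (take (Suc j) e) q" using Q q te unfolding linset_def by blast
      moreover have "lh (take (Suc j) e) = lh q" using take_node[OF eD j] e by simp
      moreover have "q \<in> DD (As j)" "take (Suc j) e \<in> DD (As j)" using Q q te by auto
      ultimately have "q = take (Suc j) e" using prec_eq[OF As_ne] by metis
      then show "q \<in> take (Suc j) ` P" using e by blast
    qed
  qed (use Q in blast)
qed

lemma Sop_A: "k \<le> s \<Longrightarrow> u \<in> A k \<Longrightarrow> Sop k u \<in> A k"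
proof (induction k arbitrary: u)
  case 0 then show ?case by (simp add: A0)
next
  case (Suc k)
  have "dec u \<in> Raw (As k)" using A_dec[of "Suc k" u] Suc.prems by auto
  moreover have "\<And>v. v \<in> last (As k) \<Longrightarrow> Sop k v \<in> last (As k)" using Suc by (simp add: last_As)
  ultimately have "(\<lambda>p. map_option (Sop k) (dec u p)) \<in> Raw (As k)" by (rule Raw_map)
  then show ?case by (simp add: A_Suc)
qed

lemma Sop_raw:
  assumes "Suc k \<le> s" "u \<in> A (Suc k)"
  shows "(\<lambda>p. map_option (Sop k) (dec u p)) \<in> Raw (As k)"
  using Raw_map[OF A_dec(1)[of "Suc k" u], of "Sop k"] Sop_A assms by (simp add: last_As)

lemma Kc_raw: "(\<lambda>(x, m). if x \<in> D k then Some (Kc k) else None) \<in> Raw (As k)"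
  using Raw_const[OF As_ne] Kc_A by (simp add: D_As last_As)

lemma evF_A:
  assumes "envOK \<rho>" "\<alpha> \<in> M"
  shows "wfF s Z \<Longrightarrow> evF \<rho> \<alpha> Z = Some v \<Longrightarrow> v \<in> A (ty Z)"
proof (induction Z arbitrary: v rule: fnl_induct)
  case (FV k n i)
  then have n: "1 \<le> n" "n \<le> s" "v = snd \<rho> k n i" by auto
  then have "snd \<rho> k n i \<in> Dom k n" using assms(1) unfolding envOK_def by blast
  then show ?case using n Dom_A[OF n(1)] by auto
next
  case (KC n) then show ?case using Kc_A by auto
next
  case (NS Z)
  then obtain w where w: "evF \<rho> \<alpha> Z = Some w" "v = Sop (ty Z) w" by auto
  have "wfF s Z" using NS.prems by simp
  then have "w \<in> A (ty Z)" "ty Z \<le> s" using NS.IH w wf_ty by blast+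
  then show ?case using Sop_A w by simp
next
  case (ApF Z t)
  obtain f m where f: "evF \<rho> \<alpha> Z = Some f" "evT \<rho> \<alpha> t = Some m" "dec f (take (ty Z) \<alpha>, m) = Some v"
    using ApF.prems(2) by (auto split: option.splits)
  have wz: "wfF s Z" "2 \<le> ty Z" using ApF.prems(1) by auto
  have "f \<in> A (ty Z)" using ApF.IH(1)[OF wz(1) f(1)] .
  moreover have "1 \<le> ty Z" "ty Z \<le> s" using wz wf_ty by auto
  ultimately have "dec f \<in> Raw (As (ty Z - 1))" using A_dec(1) by simp
  then have "v \<in> last (As (ty Z - 1))" using f(3) by (rule RawD(2))
  then show ?case by (simp add: last_As)
qed simp_all

end

definition imap :: "(nat \<Rightarrow> 'a \<Rightarrow> 'a) \<Rightarrow> 'a list \<Rightarrow> 'a list" where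
  "imap \<sigma> l = map (\<lambda>i. \<sigma> i (l ! i)) [0..<length l]"

lemma imap_len[simp]: "length (imap \<sigma> l) = length l" by (simp add: imap_def)
lemma imap_nth[simp]: "i < length l \<Longrightarrow> imap \<sigma> l ! i = \<sigma> i (l ! i)" by (simp add: imap_def)
lemma imap_Nil[simp]: "imap \<sigma> [] = []" by (simp add: imap_def)
lemma imap_inv: "(\<And>y e. \<tau> y (\<sigma> y e) = e) \<Longrightarrow> imap \<tau> (imap \<sigma> l) = l"
  by (rule nth_equalityI) auto
lemma imap_prefix: "prefix l l' \<Longrightarrow> prefix (imap \<sigma> l) (imap \<sigma> l')"
proof -
  assume "prefix l l'"
  then have "length l \<le> length l'" "\<forall>i<length l. l ! i = l' ! i"
    by (auto simp: prefix_def nth_append)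
  then have "imap \<sigma> l = take (length l) (imap \<sigma> l')" by (auto intro!: nth_equalityI)
  then show ?thesis by (simp add: take_is_prefix)
qed

(* The type n (1 <= n <= s) of the axiom instance under consideration; the
   relabellings below act on the n-th coordinate of the nodes. *)
locale beth_level = beth_model num enc s for num :: "nat \<Rightarrow> 'u" and enc and s +
  fixes n :: nat
  assumes n_pos: "1 \<le> n" and n_le_s: "n \<le> s"
begin

definition twist :: "(nat \<Rightarrow> 'u \<Rightarrow> 'u) \<Rightarrow> 'u list list \<Rightarrow> 'u list list" where
  "twist \<sigma> x = x[n - 1 := imap \<sigma> (x ! (n - 1))]"

(* The induced map on functionals of type k: trivial below type n; at type k >= n
   the functional u becomes x |-> transport_{k-1}(u(twist tau x)), so that
   transport tau commutes with application when nodes are relabelled by the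
   inverse twist sigma of tau (transport_dec below). *)
fun transport :: "(nat \<Rightarrow> 'u \<Rightarrow> 'u) \<Rightarrow> nat \<Rightarrow> 'u \<Rightarrow> 'u" where
  "transport \<tau> 0 u = u"
| "transport \<tau> (Suc k) u = (if Suc k < n then u else enc (\<lambda>(x, m). map_option (transport \<tau> k) (dec u (twist \<tau> x, m))))"

definition inv_pair :: "(nat \<Rightarrow> 'u \<Rightarrow> 'u) \<Rightarrow> (nat \<Rightarrow> 'u \<Rightarrow> 'u) \<Rightarrow> bool" where
  "inv_pair \<sigma> \<tau> \<longleftrightarrow> (\<forall>y e. \<tau> y (\<sigma> y e) = e) \<and> (\<forall>y e. \<sigma> y (\<tau> y e) = e)
     \<and> (\<forall>y. \<forall>e\<in>A (n - 1). \<sigma> y e \<in> A (n - 1)) \<and> (\<forall>y. \<forall>e\<in>A (n - 1). \<tau> y e \<in> A (n - 1))"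

lemma inv_pair_sym: "inv_pair \<sigma> \<tau> \<Longrightarrow> inv_pair \<tau> \<sigma>" unfolding inv_pair_def by blast

lemma twist_len[simp]: "length (twist \<sigma> x) = length x" by (simp add: twist_def)

lemma twist_nth: "i < length x \<Longrightarrow> twist \<sigma> x ! i = (if i = n - 1 then imap \<sigma> (x ! i) else x ! i)"
  by (simp add: twist_def)

lemma twist_nth_len[simp]: "i < length x \<Longrightarrow> length (twist \<sigma> x ! i) = length (x ! i)"
  by (simp add: twist_nth)

lemma twist_inv: "inv_pair \<sigma> \<tau> \<Longrightarrow> twist \<tau> (twist \<sigma> x) = x"
  by (rule nth_equalityI) (auto simp: twist_nth inv_pair_def imap_inv)

lemma twist_lh[simp]: "lh (twist \<sigma> x) = lh x"
proof (cases "x = []")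
  case False
  then have "twist \<sigma> x \<noteq> []" by (metis length_0_conv twist_len)
  then show ?thesis using False by (simp add: lh_def hd_conv_nth twist_nth)
qed (simp add: twist_def)

lemma twist_short: "length x < n \<Longrightarrow> twist \<sigma> x = x"
  unfolding twist_def by (rule list_update_beyond) simp

lemma twist_take: "take j (twist \<sigma> x) = twist \<sigma> (take j x)"
proof (cases "j < n")
  case True
  then show ?thesis by (simp add: twist_def list_update_beyond)
next
  case False
  then have "n - 1 < j" using n_pos by simp
  then show ?thesis by (simp add: twist_def take_update_swap)
qed

lemma twist_DD: assumes "inv_pair \<sigma> \<tau>" "x \<in> DD (As k)" shows "twist \<sigma> x \<in> DD (As k)"
  unfolding DD_As_iff
proof (intro conjI allI impI)
  have x: "length x = Suc k" "\<forall>i\<le>k. length (x!i) = lh x \<and> set (x!i) \<subseteq> A i" using assms(2) by (auto simp: DD_As_iff)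
  show "length (twist \<sigma> x) = Suc k" using x by simp
  fix i assume i: "i \<le> k"
  show "length (twist \<sigma> x ! i) = lh (twist \<sigma> x)" using x i by (simp add: less_Suc_eq_le)
  show "set (twist \<sigma> x ! i) \<subseteq> A i"
  proof (cases "i = n - 1")
    case True
    show ?thesis
    proof
      fix e assume "e \<in> set (twist \<sigma> x ! i)"
      then obtain j where j: "j < length (x ! i)" "e = \<sigma> j (x ! i ! j)" using True x i
        by (auto simp: twist_nth in_set_conv_nth)
      then have "x ! i ! j \<in> A i" using x i by (auto simp: subset_iff)
      then show "e \<in> A i" using assms(1) j True unfolding inv_pair_def by auto
    qed
  qed (use x i in \<open>auto simp: twist_nth\<close>)
qed

lemma twist_DD_iff: "inv_pair \<sigma> \<tau> \<Longrightarrow> twist \<sigma> x \<in> DD (As k) \<longleftrightarrow> x \<in> DD (As k)"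
  by (metis twist_DD twist_inv inv_pair_sym)

lemma twist_prec: "prec y x \<Longrightarrow> prec (twist \<sigma> y) (twist \<sigma> x)"
  unfolding prec_def by (auto simp: twist_nth imap_prefix)

lemma twist_prec_iff: "inv_pair \<sigma> \<tau> \<Longrightarrow> prec (twist \<sigma> y) (twist \<sigma> x) \<longleftrightarrow> prec y x"
  by (metis twist_prec twist_inv)

lemma twist_M: "inv_pair \<sigma> \<tau> \<Longrightarrow> twist \<sigma> x \<in> M \<longleftrightarrow> x \<in> M"
  by (simp add: M_As twist_DD_iff)

lemma twist_rep: "twist \<sigma> (replicate j []) = replicate j []"
  by (rule nth_equalityI) (auto simp: twist_nth)

lemma twist_path: assumes "inv_pair \<sigma> \<tau>" "is_path (DD (As k)) prec P" shows "is_path (DD (As k)) prec (twist \<sigma> ` P)"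
proof (rule path_image[OF assms(2)])
  have g2: "inv_pair \<tau> \<sigma>" using inv_pair_sym[OF assms(1)] .
  show "\<And>x. x \<in> DD (As k) \<Longrightarrow> twist \<sigma> x \<in> DD (As k)" using twist_DD[OF assms(1)] .
  show "\<And>x. x \<in> DD (As k) \<Longrightarrow> twist \<tau> x \<in> DD (As k)" using twist_DD[OF g2] .
  show "\<And>x. x \<in> DD (As k) \<Longrightarrow> twist \<sigma> (twist \<tau> x) = x" using twist_inv[OF g2] by blast
  show "\<And>x. x \<in> DD (As k) \<Longrightarrow> twist \<tau> (twist \<sigma> x) = x" using twist_inv[OF assms(1)] by blast
  show "\<And>x y. prec x y \<Longrightarrow> prec (twist \<sigma> x) (twist \<sigma> y)" by (rule twist_prec)
  show "\<And>x y. prec x y \<Longrightarrow> prec (twist \<tau> x) (twist \<tau> y)" by (rule twist_prec)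
qed

lemma thru_twist:
  assumes "inv_pair \<sigma> \<tau>"
  shows "thru (twist \<sigma> \<alpha>) = (\<lambda>P. twist \<sigma> ` P) ` thru \<alpha>"
proof
  show "thru (twist \<sigma> \<alpha>) \<subseteq> (\<lambda>P. twist \<sigma> ` P) ` thru \<alpha>"
  proof
    fix P assume "P \<in> thru (twist \<sigma> \<alpha>)"
    then have P: "is_path M prec P" "twist \<sigma> \<alpha> \<in> P" by (auto simp: thru_def)
    have "is_path M prec (twist \<tau> ` P)" using twist_path[OF inv_pair_sym[OF assms]] P(1) by (simp add: M_As)
    moreover have "\<alpha> \<in> twist \<tau> ` P" using P(2) twist_inv[OF assms] by (metis imageI)
    moreover have "P = twist \<sigma> ` (twist \<tau> ` P)" using twist_inv[OF inv_pair_sym[OF assms]] by (simp add: image_comp)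
    ultimately show "P \<in> (\<lambda>P. twist \<sigma> ` P) ` thru \<alpha>" by (auto simp: thru_def)
  qed
next
  show "(\<lambda>P. twist \<sigma> ` P) ` thru \<alpha> \<subseteq> thru (twist \<sigma> \<alpha>)"
    using twist_path[OF assms] by (auto simp: thru_def M_As)
qed

lemma twist_fix:
  assumes b: "\<beta> \<in> M" and fx: "\<And>y. y < lh \<beta> \<Longrightarrow> \<sigma> y (\<beta> ! (n - 1) ! y) = \<beta> ! (n - 1) ! y"
  shows "twist \<sigma> \<beta> = \<beta>"
proof -
  have "length (\<beta> ! (n - 1)) = lh \<beta>" using b n_pos n_le_s by (auto simp: M_As DD_As_iff)
  then have "imap \<sigma> (\<beta> ! (n - 1)) = \<beta> ! (n - 1)" using fx by (intro nth_equalityI) simp_all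
  then show ?thesis by (simp add: twist_def)
qed

lemma Raw_twist:
  assumes f: "f \<in> Raw (As k)" and g: "inv_pair \<sigma> \<tau>"
  shows "(\<lambda>(x, m). f (twist \<tau> x, m)) \<in> Raw (As k)"
proof -
  have g2: "inv_pair \<tau> \<sigma>" using inv_pair_sym[OF g] .
  show ?thesis
  proof (rule RawI)
    fix x n assume "x \<notin> DD (As k)"
    then show "(\<lambda>(x, m). f (twist \<tau> x, m)) (x, n) = None" using RawD(1)[OF f] twist_DD_iff[OF g2] by simp
  next
    fix x n v assume "(\<lambda>(x, m). f (twist \<tau> x, m)) (x, n) = Some v"
    then show "v \<in> last (As k)" using RawD(2)[OF f] by simp
  next
    fix x y n v assume a: "x \<in> DD (As k)" "y \<in> DD (As k)" "prec y x"
      "(\<lambda>(x, m). f (twist \<tau> x, m)) (x, n) = Some v"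
    have "twist \<tau> x \<in> DD (As k)" "twist \<tau> y \<in> DD (As k)" "prec (twist \<tau> y) (twist \<tau> x)"
      using a twist_DD_iff[OF g2] twist_prec by auto
    then show "(\<lambda>(x, m). f (twist \<tau> x, m)) (y, n) = Some v" using RawD(3)[OF f] a(4) by simp
  next
    fix P n assume "is_path (DD (As k)) prec P"
    then have "is_path (DD (As k)) prec (twist \<tau> ` P)" by (rule twist_path[OF g2])
    then obtain x' where "x' \<in> twist \<tau> ` P" "f (x', n) \<noteq> None" using RawD(4)[OF f] by blast
    then show "\<exists>x\<in>P. (\<lambda>(x, m). f (twist \<tau> x, m)) (x, n) \<noteq> None" by auto
  qed
qed

lemma Raw_transform:
  assumes f: "f \<in> Raw (As k)" and g: "inv_pair \<sigma> \<tau>" and Q: "\<And>v. v \<in> A k \<Longrightarrow> Q v \<in> A k"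
  shows "(\<lambda>(x, m). map_option Q (f (twist \<tau> x, m))) \<in> Raw (As k)"
  using Raw_map[OF Raw_twist[OF f g], of Q] Q by (simp add: last_As case_prod_unfold)

lemma nu_twist:
  assumes g: "inv_pair \<sigma> \<tau>"
  shows "nu j \<xi> (twist \<tau> x, m) = nu j (\<lambda>m e. \<xi> m (if j = n - 1 then \<tau> m e else e)) (x, m)"
proof (cases "x \<in> DD (As j) \<and> m < lh x")
  case True
  then have xD: "x \<in> DD (As j)" "m < lh x" by auto
  have TD: "twist \<tau> x \<in> DD (As j)" using twist_DD_iff[OF inv_pair_sym[OF g]] xD by simp
  have lj: "length x = Suc j" using xD node_len by blast
  have "last (twist \<tau> x) = (if j = n - 1 then imap \<tau> (x ! j) else x ! j)"
    using last_node[OF TD] lj by (simp add: twist_nth)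
  moreover have "m < length (x ! j)" using xD by (auto simp: DD_As_iff)
  ultimately have "last (twist \<tau> x) ! m = (if j = n - 1 then \<tau> m (last x ! m) else last x ! m)"
    using last_node[OF xD(1)] by auto
  then show ?thesis using xD TD twist_lh[of \<tau> x] by (simp add: nu_def lh_def)
next
  case False
  then have "\<not> (twist \<tau> x \<in> DD (As j) \<and> m < lh (twist \<tau> x))"
    using twist_DD_iff[OF inv_pair_sym[OF g]] by simp
  then show ?thesis using False by (simp add: nu_def lh_def)
qed

lemma transport_low: "k < n \<Longrightarrow> transport \<tau> k u = u"
  by (cases k) auto

lemma transport_step:
  assumes g: "inv_pair \<sigma> \<tau>" and k: "Suc k \<le> s" "\<not> Suc k < n" and u: "u \<in> A (Suc k)"
    and IH: "\<And>v. v \<in> A k \<Longrightarrow> transport \<tau> k v \<in> A k"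
  shows "transport \<tau> (Suc k) u \<in> A (Suc k)"
    "dec (transport \<tau> (Suc k) u) = (\<lambda>(x, m). map_option (transport \<tau> k) (dec u (twist \<tau> x, m)))"
proof -
  have "dec u \<in> Raw (As k)" using A_dec[of "Suc k" u] k u by auto
  then have R: "(\<lambda>(x, m). map_option (transport \<tau> k) (dec u (twist \<tau> x, m))) \<in> Raw (As k)"
    using Raw_transform[OF _ g] IH by blast
  then show "transport \<tau> (Suc k) u \<in> A (Suc k)" using k(2) by (simp add: A_Suc)
  show "dec (transport \<tau> (Suc k) u) = (\<lambda>(x, m). map_option (transport \<tau> k) (dec u (twist \<tau> x, m)))"
    using dec_enc Raw_Univ[of "Suc k"] R k by auto
qed

lemma transport_main:
  "k \<le> s \<Longrightarrow> inv_pair \<sigma> \<tau> \<Longrightarrow> u \<in> A k \<Longrightarrow> transport \<tau> k u \<in> A k \<and> transport \<sigma> k (transport \<tau> k u) = u"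
proof (induction k arbitrary: u)
  case (Suc k)
  show ?case
  proof (cases "Suc k < n")
    case False
    have IH: "\<And>v. v \<in> A k \<Longrightarrow> transport \<tau> k v \<in> A k \<and> transport \<sigma> k (transport \<tau> k v) = v"
      using Suc by auto
    note step = transport_step[OF Suc.prems(2,1) False Suc.prems(3)]
    have dec_u: "dec u \<in> Raw (As k)" "enc (dec u) = u" using A_dec[of "Suc k" u] Suc.prems by auto
    have "map_option (transport \<sigma> k) (dec (transport \<tau> (Suc k) u) (twist \<sigma> x, m)) = dec u (x, m)" for x m
    proof -
      have "dec (transport \<tau> (Suc k) u) (twist \<sigma> x, m) = map_option (transport \<tau> k) (dec u (x, m))"
        using step(2) IH twist_inv[OF Suc.prems(2)] by simp
      moreover have "\<And>v. dec u (x, m) = Some v \<Longrightarrow> v \<in> A k" using RawD(2)[OF dec_u(1)] by (simp add: last_As)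
      ultimately show ?thesis using IH by (cases "dec u (x, m)") auto
    qed
    then show ?thesis using False step IH dec_u(2) by simp
  qed (use Suc.prems in simp)
qed simp

lemma transport_A: "inv_pair \<sigma> \<tau> \<Longrightarrow> k \<le> s \<Longrightarrow> u \<in> A k \<Longrightarrow> transport \<tau> k u \<in> A k"
  using transport_main by blast
lemma transport_inv: "inv_pair \<sigma> \<tau> \<Longrightarrow> k \<le> s \<Longrightarrow> u \<in> A k \<Longrightarrow> transport \<sigma> k (transport \<tau> k u) = u"
  using transport_main by blast

lemma transport_dec:
  assumes g: "inv_pair \<sigma> \<tau>" and k: "1 \<le> k" "k \<le> s" and u: "u \<in> A k" and x: "length x = k"
  shows "dec (transport \<tau> k u) (twist \<sigma> x, m) = map_option (transport \<tau> (k - 1)) (dec u (x, m))"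
proof -
  obtain j where j: "k = Suc j" using k by (cases k) auto
  show ?thesis
  proof (cases "Suc j < n")
    case True
    then have "transport \<tau> j = (\<lambda>v. v)" using transport_low by (intro ext) simp
    then show ?thesis using True j x twist_short transport_low by (simp add: option.map_ident)
  next
    case False
    then show ?thesis using transport_step(2)[OF g _ False, of u] transport_A[OF g] k u j twist_inv[OF g]
      by simp
  qed
qed

lemma transport_n: "transport \<tau> n u = enc (\<lambda>(x, m). dec u (twist \<tau> x, m))"
proof -
  obtain j where j: "n = Suc j" using n_pos by (cases n) auto
  have nj: "\<not> Suc j < n" "j < n" using j by auto
  have "transport \<tau> j = (\<lambda>v. v)" using transport_low[OF nj(2)] by (intro ext) simp
  then have "transport \<tau> (Suc j) u = enc (\<lambda>(x, m). dec u (twist \<tau> x, m))"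
    using nj(1) by (simp add: option.map_ident)
  then show ?thesis by (metis j)
qed

lemma transport_Kc: "inv_pair \<sigma> \<tau> \<Longrightarrow> k \<le> s \<Longrightarrow> transport \<tau> k (Kc k) = Kc k"
proof (induction k)
  case (Suc k)
  show ?case
  proof (cases "Suc k < n")
    case False
    define g :: "'u list list \<times> nat \<Rightarrow> 'u option" where "g = (\<lambda>(x, m). if x \<in> D k then Some (Kc k) else None)"
    have dg: "dec (Kc (Suc k)) = g" using dec_enc Raw_Univ[of "Suc k"] Suc.prems Kc_raw by (auto simp: g_def)
    have "(\<lambda>(x, m). map_option (transport \<tau> k) (g (twist \<tau> x, m))) = g"
      using twist_DD_iff[OF inv_pair_sym[OF Suc.prems(1)]] Suc by (auto simp: g_def D_As)
    then show ?thesis using False dg by (simp add: g_def)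
  qed simp
qed simp

lemma transport_Sop: "inv_pair \<sigma> \<tau> \<Longrightarrow> k \<le> s \<Longrightarrow> u \<in> A k \<Longrightarrow> transport \<tau> k (Sop k u) = Sop k (transport \<tau> k u)"
proof (induction k arbitrary: u)
  case (Suc k)
  show ?case
  proof (cases "Suc k < n")
    case False
    have g: "inv_pair \<sigma> \<tau>" using Suc.prems by simp
    have f: "dec u \<in> Raw (As k)" using A_dec[of "Suc k" u] Suc.prems by auto
    have dS: "dec (Sop (Suc k) u) = (\<lambda>p. map_option (Sop k) (dec u p))"
      using dec_enc Raw_Univ[of "Suc k"] Suc.prems Sop_raw by auto
    have dT: "dec (transport \<tau> (Suc k) u) = (\<lambda>(x, m). map_option (transport \<tau> k) (dec u (twist \<tau> x, m)))"
      using transport_step(2)[OF g _ False] transport_A[OF g] Suc.prems by simp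
    have "map_option (transport \<tau> k) (map_option (Sop k) (dec u (twist \<tau> x, m)))
        = map_option (Sop k) (map_option (transport \<tau> k) (dec u (twist \<tau> x, m)))" for x m
    proof -
      have "\<And>v. dec u (twist \<tau> x, m) = Some v \<Longrightarrow> v \<in> A k" using RawD(2)[OF f] by (simp add: last_As)
      then show ?thesis using Suc.IH[OF g] Suc.prems(2) by (cases "dec u (twist \<tau> x, m)") auto
    qed
    then show ?thesis using False dS dT by (simp add: case_prod_unfold)
  qed simp
qed simp

lemma bij_tau: "inv_pair \<sigma> \<tau> \<Longrightarrow> bij_betw (\<tau> m) (A (n - 1)) (A (n - 1))"
  unfolding inv_pair_def by (intro bij_betw_byWitness[where f'="\<sigma> m"]) auto

lemma bij_transport: "inv_pair \<sigma> \<tau> \<Longrightarrow> j \<le> s \<Longrightarrow> bij_betw (transport \<tau> j) (A j) (A j)"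
  by (intro bij_betw_byWitness[where f'="transport \<sigma> j"])
    (use transport_inv transport_A inv_pair_sym in \<open>blast\<close>)+

lemma nu_map: "map_option Q (nu j \<xi> p) = nu j (\<lambda>m e. Q (\<xi> m e)) p"
  by (cases p) (simp add: nu_def)

(* Transport preserves lawlessness: it turns nu(xi) into nu(xi'), where xi' is
   xi composed with the bijections tau (at type n) and transport (values). *)
lemma transport_L:
  assumes g: "inv_pair \<sigma> \<tau>" and k: "1 \<le> k" "k \<le> s" and c: "c \<in> L k"
  shows "transport \<tau> k c \<in> L k"
proof -
  obtain j where j: "k = Suc j" using k by (cases k) auto
  obtain \<xi> where xi: "\<forall>m. bij_betw (\<xi> m) (A j) (A j)" "c = enc (nu j \<xi>)" "dec c = nu j \<xi>"
    using L_elim[OF k c] j by auto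
  show ?thesis
  proof (cases "Suc j < n")
    case True then show ?thesis using c j by simp
  next
    case False
    define \<xi>' where "\<xi>' = (\<lambda>m e. transport \<tau> j (\<xi> m (if j = n - 1 then \<tau> m e else e)))"
    have "bij_betw (\<xi>' m) (A j) (A j)" for m
    proof -
      have b: "bij_betw (\<lambda>e. if j = n - 1 then \<tau> m e else e) (A j) (A j)"
        using bij_tau[OF g] by (cases "j = n - 1") (auto simp: bij_betw_def)
      have "bij_betw (transport \<tau> j \<circ> (\<xi> m \<circ> (\<lambda>e. if j = n - 1 then \<tau> m e else e))) (A j) (A j)"
        using bij_betw_trans[OF bij_betw_trans[OF b xi(1)[rule_format]] bij_transport[OF g]] k j by simp
      then show ?thesis by (simp add: \<xi>'_def comp_def)
    qed
    moreover have "transport \<tau> k c = enc (nu j \<xi>')"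
      using False j xi(3) by (simp add: nu_twist[OF g] nu_map \<xi>'_def)
    ultimately show ?thesis using nu_L[of k \<xi>'] j by simp
  qed
qed

(* Transport preserves lawlikeness: the root is fixed by every twist. *)
lemma transport_B:
  assumes g: "inv_pair \<sigma> \<tau>" and k: "1 \<le> k" "k \<le> s" and c: "c \<in> B k"
  shows "transport \<tau> k c \<in> B k"
proof -
  obtain j where j: "k = Suc j" using k by (cases k) auto
  obtain f where f: "f \<in> Raw (As j)" "\<forall>m. f (replicate k [], m) \<noteq> None" "c = enc f" using c j by (auto simp: B_def)
  show ?thesis
  proof (cases "Suc j < n")
    case True then show ?thesis using c j by simp
  next
    case False
    have dc: "dec c = f" using f dec_enc Raw_Univ[of k] k j by auto
    have IH: "\<And>v. v \<in> A j \<Longrightarrow> transport \<tau> j v \<in> A j" using transport_A[OF g] k j by simp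
    define f' where "f' = (\<lambda>(x, m). map_option (transport \<tau> j) (f (twist \<tau> x, m)))"
    have f'R: "f' \<in> Raw (As j)" unfolding f'_def using Raw_transform[OF f(1) g] IH by blast
    have "\<forall>m. f' (replicate k [], m) \<noteq> None" using f(2) twist_rep by (simp add: f'_def)
    moreover have "transport \<tau> k c = enc f'" using False j dc by (simp add: f'_def)
    ultimately show ?thesis using f'R j by (auto simp: B_def)
  qed
qed

(* Lawlike functionals of type n are fixed by transport: they are determined by
   their values at the root. *)
lemma transport_Bn:
  assumes g: "inv_pair \<sigma> \<tau>" and c: "c \<in> B n"
  shows "transport \<tau> n c = c"
proof -
  obtain j where j: "n = Suc j" using n_pos by (cases n) auto
  obtain f where f: "f \<in> Raw (As j)" "\<forall>m. f (replicate n [], m) \<noteq> None" "c = enc f" using c j by (auto simp: B_def)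
  have dc: "dec c = f" using f dec_enc Raw_Univ[of n] n_pos n_le_s j by auto
  have "(\<lambda>(x, m). map_option (transport \<tau> j) (f (twist \<tau> x, m))) = f"
  proof (intro ext, clarify)
    fix x m
    have Pj: "transport \<tau> j = (\<lambda>v. v)" using transport_low j by (intro ext) simp
    show "map_option (transport \<tau> j) (f (twist \<tau> x, m)) = f (x, m)"
    proof (cases "x \<in> DD (As j)")
      case True
      have TD: "twist \<tau> x \<in> DD (As j)" using twist_DD_iff[OF inv_pair_sym[OF g]] True by simp
      obtain v where v: "f (replicate n [], m) = Some v" using f(2) by blast
      have rD: "replicate n [] \<in> DD (As j)" using root_DD[of "As j"] j by simp
      have "f (x, m) = Some v" using RawD(3)[OF f(1) rD True _ v] prec_root[of "As j" x] True j by simp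
      moreover have "f (twist \<tau> x, m) = Some v" using RawD(3)[OF f(1) rD TD _ v] prec_root[of "As j" "twist \<tau> x"] TD j by simp
      ultimately show ?thesis using Pj by simp
    next
      case False
      then have "twist \<tau> x \<notin> DD (As j)" using twist_DD_iff[OF inv_pair_sym[OF g]] by simp
      then show ?thesis using False RawD(1)[OF f(1)] by simp
    qed
  qed
  moreover have "\<not> Suc j < n" using j by simp
  ultimately have "transport \<tau> (Suc j) c = c" using dc f(3) by simp
  moreover have "transport \<tau> n c = transport \<tau> (Suc j) c" by (metis j)
  ultimately show ?thesis by simp
qed

lemma transport_Dom: "inv_pair \<sigma> \<tau> \<Longrightarrow> 1 \<le> m \<Longrightarrow> m \<le> s \<Longrightarrow> c \<in> Dom k m \<Longrightarrow> transport \<tau> m c \<in> Dom k m"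
  by (cases k) (auto simp: A_def intro: transport_A[unfolded A_def] transport_B transport_L)

lemma transport_Dom_surj: "inv_pair \<sigma> \<tau> \<Longrightarrow> 1 \<le> m \<Longrightarrow> m \<le> s \<Longrightarrow> c \<in> Dom k m \<Longrightarrow> \<exists>c'\<in>Dom k m. transport \<tau> m c' = c"
proof -
  assume a: "inv_pair \<sigma> \<tau>" "1 \<le> m" "m \<le> s" "c \<in> Dom k m"
  have g2: "inv_pair \<tau> \<sigma>" using inv_pair_sym[OF a(1)] .
  have "transport \<sigma> m c \<in> Dom k m" using transport_Dom[OF g2 a(2-4)] .
  moreover have "transport \<tau> m (transport \<sigma> m c) = c" using transport_inv[OF g2 a(3)] a(2,4) Dom_A by blast
  ultimately show ?thesis by blast
qed

lemma transport_0: "transport \<tau> 0 = (\<lambda>u. u)" by (rule ext) simp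

definition transport_env :: "(nat \<Rightarrow> 'u \<Rightarrow> 'u) \<Rightarrow> 'u env \<Rightarrow> 'u env" where
  "transport_env \<tau> \<rho> = (fst \<rho>, \<lambda>k m i. transport \<tau> m (snd \<rho> k m i))"

lemma transport_env_fst[simp]: "fst (transport_env \<tau> \<rho>) = fst \<rho>" by (simp add: transport_env_def)
lemma transport_env_snd[simp]: "snd (transport_env \<tau> \<rho>) k m i = transport \<tau> m (snd \<rho> k m i)" by (simp add: transport_env_def)

lemma transport_env_updN: "transport_env \<tau> (updN \<rho> i c) = updN (transport_env \<tau> \<rho>) i c"
  by (simp add: transport_env_def updN_def)
lemma transport_env_updF: "transport_env \<tau> (updF \<rho> k m i c) = updF (transport_env \<tau> \<rho>) k m i (transport \<tau> m c)"
  by (auto simp: transport_env_def updF_def intro!: ext)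

lemma envOK_updN: "envOK \<rho> \<Longrightarrow> envOK (updN \<rho> i c)"
  by (simp add: envOK_def updN_def)
lemma envOK_updF: "envOK \<rho> \<Longrightarrow> c \<in> Dom k m \<Longrightarrow> envOK (updF \<rho> k m i c)"
  by (simp add: envOK_def updF_def)

lemma eval_transport:
  assumes g: "inv_pair \<sigma> \<tau>" and e: "envOK \<rho>" and a: "\<alpha> \<in> M"
  shows "wfT s t \<Longrightarrow> evT (transport_env \<tau> \<rho>) (twist \<sigma> \<alpha>) t = evT \<rho> \<alpha> t"
    "wfF s Z \<Longrightarrow> evF (transport_env \<tau> \<rho>) (twist \<sigma> \<alpha>) Z = map_option (transport \<tau> (ty Z)) (evF \<rho> \<alpha> Z)"
proof (induction t and Z)
  case (Ap1 Z t)
  have wz: "wfF s Z" "ty Z = 1" "wfT s t" using Ap1.prems by auto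
  show ?case
  proof (cases "evF \<rho> \<alpha> Z")
    case None then show ?thesis using Ap1.IH(1)[OF wz(1)] by simp
  next
    case (Some f)
    have fA: "f \<in> A 1" using evF_A[OF e a wz(1) Some] wz(2) by simp
    have l1: "length (take 1 \<alpha>) = 1" using M_len[OF a] s_pos by simp
    have "\<And>m. dec (transport \<tau> 1 f) (take 1 (twist \<sigma> \<alpha>), m) = dec f (take 1 \<alpha>, m)"
      using transport_dec[OF g _ s_pos fA l1] by (simp add: twist_take transport_0 option.map_ident del: transport.simps)
    then show ?thesis using Ap1.IH(1)[OF wz(1)] Ap1.IH(2)[OF wz(3)] Some wz(2)
      by (simp del: transport.simps split: option.splits)
  qed
next
  case (ApF Z t)
  have wz: "wfF s Z" "2 \<le> ty Z" "wfT s t" "ty Z \<le> s" using ApF.prems wf_ty by auto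
  show ?case
  proof (cases "evF \<rho> \<alpha> Z")
    case None then show ?thesis using ApF.IH(1)[OF wz(1)] by simp
  next
    case (Some f)
    have fA: "f \<in> A (ty Z)" using evF_A[OF e a wz(1) Some] by simp
    have l1: "length (take (ty Z) \<alpha>) = ty Z" using M_len[OF a] wz by simp
    have "\<And>m. dec (transport \<tau> (ty Z) f) (take (ty Z) (twist \<sigma> \<alpha>), m) = map_option (transport \<tau> (ty Z - 1)) (dec f (take (ty Z) \<alpha>, m))"
      using transport_dec[OF g _ wz(4) fA l1] wz by (simp add: twist_take)
    then show ?thesis using ApF.IH(1)[OF wz(1)] ApF.IH(2)[OF wz(3)] Some
      by (simp del: transport.simps split: option.splits)
  qed
next
  case (NS Z)
  have wz: "wfF s Z" "ty Z \<le> s" using NS.prems wf_ty by auto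
  show ?case
  proof (cases "evF \<rho> \<alpha> Z")
    case None then show ?thesis using NS.IH[OF wz(1)] by simp
  next
    case (Some f)
    have fA: "f \<in> A (ty Z)" using evF_A[OF e a wz(1) Some] by simp
    then show ?thesis using NS.IH[OF wz(1)] Some transport_Sop[OF g wz(2) fA] by simp
  qed
next
  case (KC m)
  then show ?case using transport_Kc[OF g] by simp
qed (auto split: option.splits)

lemma thru_transfer:
  assumes g: "inv_pair \<sigma> \<tau>" and Q: "\<And>\<beta>. \<beta> \<in> M \<Longrightarrow> Q (twist \<sigma> \<beta>) = Q' \<beta>"
  shows "(\<forall>P\<in>thru (twist \<sigma> \<alpha>). \<exists>\<beta>\<in>P. Q \<beta>) = (\<forall>P\<in>thru \<alpha>. \<exists>\<beta>\<in>P. Q' \<beta>)"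
proof -
  have "\<And>P. P \<in> thru \<alpha> \<Longrightarrow> (\<exists>\<beta>\<in>twist \<sigma> ` P. Q \<beta>) = (\<exists>\<beta>\<in>P. Q' \<beta>)"
  proof -
    fix P assume "P \<in> thru \<alpha>"
    then have "P \<subseteq> M" by (auto simp: thru_def is_path_def)
    then show "(\<exists>\<beta>\<in>twist \<sigma> ` P. Q \<beta>) = (\<exists>\<beta>\<in>P. Q' \<beta>)" using Q by auto
  qed
  then show ?thesis using thru_twist[OF g] by simp
qed

lemma M_transfer:
  assumes g: "inv_pair \<sigma> \<tau>" and R: "\<And>\<beta>. \<beta> \<in> M \<Longrightarrow> R (twist \<sigma> \<beta>) = R' \<beta>"
  shows "(\<forall>\<beta>\<in>M. prec \<beta> (twist \<sigma> \<alpha>) \<longrightarrow> R \<beta>) = (\<forall>\<beta>\<in>M. prec \<beta> \<alpha> \<longrightarrow> R' \<beta>)"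
proof
  assume L: "\<forall>\<beta>\<in>M. prec \<beta> (twist \<sigma> \<alpha>) \<longrightarrow> R \<beta>"
  show "\<forall>\<beta>\<in>M. prec \<beta> \<alpha> \<longrightarrow> R' \<beta>"
  proof (intro ballI impI)
    fix \<beta> assume "\<beta> \<in> M" "prec \<beta> \<alpha>"
    then have "twist \<sigma> \<beta> \<in> M" "prec (twist \<sigma> \<beta>) (twist \<sigma> \<alpha>)" using twist_M[OF g] twist_prec by auto
    then show "R' \<beta>" using L R \<open>\<beta> \<in> M\<close> by auto
  qed
next
  assume L: "\<forall>\<beta>\<in>M. prec \<beta> \<alpha> \<longrightarrow> R' \<beta>"
  show "\<forall>\<beta>\<in>M. prec \<beta> (twist \<sigma> \<alpha>) \<longrightarrow> R \<beta>"
  proof (intro ballI impI)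
    fix \<beta> assume b: "\<beta> \<in> M" "prec \<beta> (twist \<sigma> \<alpha>)"
    define \<beta>0 where "\<beta>0 = twist \<tau> \<beta>"
    have b0: "\<beta> = twist \<sigma> \<beta>0" using twist_inv[OF inv_pair_sym[OF g]] by (simp add: \<beta>0_def)
    have "\<beta>0 \<in> M" using b b0 twist_M[OF g] by simp
    moreover have "prec \<beta>0 \<alpha>" using b b0 twist_prec_iff[OF g] by simp
    ultimately show "R \<beta>" using L R b0 by auto
  qed
qed

lemma M_ex_transfer:
  assumes g: "inv_pair \<sigma> \<tau>" and R: "\<And>\<beta>. \<beta> \<in> M \<Longrightarrow> R (twist \<sigma> \<beta>) = R' \<beta>"
  shows "(\<exists>\<gamma>\<in>M. prec (twist \<sigma> \<alpha>) \<gamma> \<and> R \<gamma>) = (\<exists>\<gamma>\<in>M. prec \<alpha> \<gamma> \<and> R' \<gamma>)"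
proof
  assume "\<exists>\<gamma>\<in>M. prec (twist \<sigma> \<alpha>) \<gamma> \<and> R \<gamma>"
  then obtain \<gamma> where c: "\<gamma> \<in> M" "prec (twist \<sigma> \<alpha>) \<gamma>" "R \<gamma>" by blast
  define \<gamma>0 where "\<gamma>0 = twist \<tau> \<gamma>"
  have b0: "\<gamma> = twist \<sigma> \<gamma>0" using twist_inv[OF inv_pair_sym[OF g]] by (simp add: \<gamma>0_def)
  have "\<gamma>0 \<in> M" using c b0 twist_M[OF g] by simp
  moreover have "prec \<alpha> \<gamma>0" using c b0 twist_prec_iff[OF g] by simp
  ultimately show "\<exists>\<gamma>\<in>M. prec \<alpha> \<gamma> \<and> R' \<gamma>" using c R b0 by auto
next
  assume "\<exists>\<gamma>\<in>M. prec \<alpha> \<gamma> \<and> R' \<gamma>"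
  then obtain \<gamma> where c: "\<gamma> \<in> M" "prec \<alpha> \<gamma>" "R' \<gamma>" by blast
  then have "twist \<sigma> \<gamma> \<in> M" "prec (twist \<sigma> \<alpha>) (twist \<sigma> \<gamma>)" "R (twist \<sigma> \<gamma>)" using twist_M[OF g] twist_prec R by auto
  then show "\<exists>\<gamma>\<in>M. prec (twist \<sigma> \<alpha>) \<gamma> \<and> R \<gamma>" by blast
qed

lemma Dom_all_transfer:
  assumes g: "inv_pair \<sigma> \<tau>" "1 \<le> m" "m \<le> s"
  shows "(\<forall>c\<in>Dom k m. Q c) = (\<forall>c\<in>Dom k m. Q (transport \<tau> m c))"
  using transport_Dom[OF g] transport_Dom_surj[OF g] by metis

lemma Dom_ex_transfer:
  assumes g: "inv_pair \<sigma> \<tau>" "1 \<le> m" "m \<le> s"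
  shows "(\<exists>c\<in>Dom k m. Q c) = (\<exists>c\<in>Dom k m. Q (transport \<tau> m c))"
  using transport_Dom[OF g] transport_Dom_surj[OF g] by metis

lemma transport_option_inj:
  assumes g: "inv_pair \<sigma> \<tau>" "k \<le> s" "\<And>v. a = Some v \<Longrightarrow> v \<in> A k" "\<And>v. b = Some v \<Longrightarrow> v \<in> A k"
  shows "(map_option (transport \<tau> k) a = map_option (transport \<tau> k) b) = (a = b)"
  using transport_inv[OF g(1,2)] assms(3,4) by (cases a; cases b) (auto, metis)

lemma evF_eq_transport:
  assumes g: "inv_pair \<sigma> \<tau>" and e: "envOK \<rho>" and b: "\<beta> \<in> M"
    and w: "wfF s Z" "wfF s V" "ty Z = ty V"
  shows "(evF (transport_env \<tau> \<rho>) (twist \<sigma> \<beta>) Z \<noteq> None \<and> evF (transport_env \<tau> \<rho>) (twist \<sigma> \<beta>) Z = evF (transport_env \<tau> \<rho>) (twist \<sigma> \<beta>) V)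
     = (evF \<rho> \<beta> Z \<noteq> None \<and> evF \<rho> \<beta> Z = evF \<rho> \<beta> V)"
proof -
  have "(map_option (transport \<tau> (ty Z)) (evF \<rho> \<beta> Z) = map_option (transport \<tau> (ty Z)) (evF \<rho> \<beta> V))
      = (evF \<rho> \<beta> Z = evF \<rho> \<beta> V)"
  proof (rule transport_option_inj[OF g])
    show "ty Z \<le> s" using wf_ty w(1) by simp
    show "\<And>v. evF \<rho> \<beta> Z = Some v \<Longrightarrow> v \<in> A (ty Z)" using evF_A[OF e b w(1)] by simp
    show "\<And>v. evF \<rho> \<beta> V = Some v \<Longrightarrow> v \<in> A (ty Z)" using evF_A[OF e b w(2)] w(3) by simp
  qed
  then show ?thesis using eval_transport(2)[OF g e b] w by simp
qed

lemma Dom_forces_transfer: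
  assumes g: "inv_pair \<sigma> \<tau>" and m: "1 \<le> m" "m \<le> s"
    and IH: "\<And>c. c \<in> Dom k m \<Longrightarrow> frc a (updF \<rho>' k m i (transport \<tau> m c)) \<alpha>' = frc a (updF \<rho> k m i c) \<alpha>"
  shows "(\<forall>c\<in>Dom k m. frc a (updF \<rho>' k m i c) \<alpha>') = (\<forall>c\<in>Dom k m. frc a (updF \<rho> k m i c) \<alpha>)"
    "(\<exists>c\<in>Dom k m. frc a (updF \<rho>' k m i c) \<alpha>') = (\<exists>c\<in>Dom k m. frc a (updF \<rho> k m i c) \<alpha>)"
proof -
  have "(\<forall>c\<in>Dom k m. frc a (updF \<rho>' k m i c) \<alpha>') = (\<forall>c\<in>Dom k m. frc a (updF \<rho>' k m i (transport \<tau> m c)) \<alpha>')"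
    by (rule Dom_all_transfer[OF g m])
  also have "\<dots> = (\<forall>c\<in>Dom k m. frc a (updF \<rho> k m i c) \<alpha>)" using IH by simp
  finally show "(\<forall>c\<in>Dom k m. frc a (updF \<rho>' k m i c) \<alpha>') = (\<forall>c\<in>Dom k m. frc a (updF \<rho> k m i c) \<alpha>)" .
  have "(\<exists>c\<in>Dom k m. frc a (updF \<rho>' k m i c) \<alpha>') = (\<exists>c\<in>Dom k m. frc a (updF \<rho>' k m i (transport \<tau> m c)) \<alpha>')"
    by (rule Dom_ex_transfer[OF g m])
  also have "\<dots> = (\<exists>c\<in>Dom k m. frc a (updF \<rho> k m i c) \<alpha>)" using IH by simp
  finally show "(\<exists>c\<in>Dom k m. frc a (updF \<rho>' k m i c) \<alpha>') = (\<exists>c\<in>Dom k m. frc a (updF \<rho> k m i c) \<alpha>)" .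
qed

lemma provability_transfer:
  assumes g: "inv_pair \<sigma> \<tau>" and IH: "\<And>\<gamma>. \<gamma> \<in> M \<Longrightarrow> frc a \<rho>' (twist \<sigma> \<gamma>) = frc a \<rho> \<gamma>"
  shows "(\<exists>\<gamma>\<in>M. prec (twist \<sigma> \<beta>) \<gamma> \<and> length (hd \<gamma>) = m \<and> frc a \<rho>' \<gamma>)
       = (\<exists>\<gamma>\<in>M. prec \<beta> \<gamma> \<and> length (hd \<gamma>) = m \<and> frc a \<rho> \<gamma>)"
proof (rule M_ex_transfer[OF g])
  fix \<gamma> assume "\<gamma> \<in> M"
  then show "(length (hd (twist \<sigma> \<gamma>)) = m \<and> frc a \<rho>' (twist \<sigma> \<gamma>)) = (length (hd \<gamma>) = m \<and> frc a \<rho> \<gamma>)"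
    using IH twist_lh[of \<sigma> \<gamma>] by (simp add: lh_def)
qed

lemma forces_transport:
  assumes g: "inv_pair \<sigma> \<tau>"
  shows "wfP s \<phi> \<Longrightarrow> envOK \<rho> \<Longrightarrow> \<alpha> \<in> M \<Longrightarrow> frc \<phi> (transport_env \<tau> \<rho>) (twist \<sigma> \<alpha>) = frc \<phi> \<rho> \<alpha>"
proof (induction \<phi> arbitrary: \<rho> \<alpha>)
  case Bot then show ?case by simp
next
  case (EqN t u)
  have "\<And>\<beta>. \<beta> \<in> M \<Longrightarrow> (evT (transport_env \<tau> \<rho>) (twist \<sigma> \<beta>) t \<noteq> None \<and> evT (transport_env \<tau> \<rho>) (twist \<sigma> \<beta>) t = evT (transport_env \<tau> \<rho>) (twist \<sigma> \<beta>) u)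
     = (evT \<rho> \<beta> t \<noteq> None \<and> evT \<rho> \<beta> t = evT \<rho> \<beta> u)"
    using eval_transport(1)[OF g EqN.prems(2)] EqN.prems(1) by simp
  then show ?case using thru_transfer[OF g] by simp
next
  case (EqF Z V)
  then have "\<And>\<beta>. \<beta> \<in> M \<Longrightarrow> (evF (transport_env \<tau> \<rho>) (twist \<sigma> \<beta>) Z \<noteq> None \<and> evF (transport_env \<tau> \<rho>) (twist \<sigma> \<beta>) Z = evF (transport_env \<tau> \<rho>) (twist \<sigma> \<beta>) V)
     = (evF \<rho> \<beta> Z \<noteq> None \<and> evF \<rho> \<beta> Z = evF \<rho> \<beta> V)"
    using evF_eq_transport[OF g] by simp
  then show ?case using thru_transfer[OF g] by simp
next
  case (Cj a b) then show ?case by simp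
next
  case (Dj a b)
  have "\<And>\<beta>. \<beta> \<in> M \<Longrightarrow> (frc a (transport_env \<tau> \<rho>) (twist \<sigma> \<beta>) \<or> frc b (transport_env \<tau> \<rho>) (twist \<sigma> \<beta>)) = (frc a \<rho> \<beta> \<or> frc b \<rho> \<beta>)"
    using Dj by simp
  then show ?case using thru_transfer[OF g] by simp
next
  case (Im a b)
  have "\<And>\<beta>. \<beta> \<in> M \<Longrightarrow> (frc a (transport_env \<tau> \<rho>) (twist \<sigma> \<beta>) \<longrightarrow> frc b (transport_env \<tau> \<rho>) (twist \<sigma> \<beta>)) = (frc a \<rho> \<beta> \<longrightarrow> frc b \<rho> \<beta>)"
    using Im by simp
  then show ?case using M_transfer[OF g] by simp
next
  case (AllN i a)
  then show ?case using envOK_updN by (simp add: transport_env_updN[symmetric])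
next
  case (ExN i a)
  have "\<And>\<beta>. \<beta> \<in> M \<Longrightarrow> (\<exists>c. frc a (updN (transport_env \<tau> \<rho>) i c) (twist \<sigma> \<beta>)) = (\<exists>c. frc a (updN \<rho> i c) \<beta>)"
    using ExN envOK_updN by (simp add: transport_env_updN[symmetric])
  then show ?case using thru_transfer[OF g] by simp
next
  case (AllF k m i a)
  have m: "1 \<le> m" "m \<le> s" "wfP s a" using AllF.prems by auto
  have "frc a (updF (transport_env \<tau> \<rho>) k m i (transport \<tau> m c)) (twist \<sigma> \<alpha>) = frc a (updF \<rho> k m i c) \<alpha>"
    if "c \<in> Dom k m" for c
    using AllF.IH m(3) envOK_updF[OF AllF.prems(2) that] AllF.prems(3) by (simp add: transport_env_updF[symmetric])
  then show ?case using Dom_forces_transfer(1)[OF g m(1,2)] by simp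
next
  case (ExF k m i a)
  have m: "1 \<le> m" "m \<le> s" "wfP s a" using ExF.prems by auto
  have "frc a (updF (transport_env \<tau> \<rho>) k m i (transport \<tau> m c)) (twist \<sigma> \<beta>) = frc a (updF \<rho> k m i c) \<beta>"
    if "c \<in> Dom k m" "\<beta> \<in> M" for c \<beta>
    using ExF.IH m(3) envOK_updF[OF ExF.prems(2) that(1)] that(2) by (simp add: transport_env_updF[symmetric])
  then have "\<And>\<beta>. \<beta> \<in> M \<Longrightarrow> (\<exists>c\<in>Dom k m. frc a (updF (transport_env \<tau> \<rho>) k m i c) (twist \<sigma> \<beta>))
      = (\<exists>c\<in>Dom k m. frc a (updF \<rho> k m i c) \<beta>)"
    using Dom_forces_transfer(2)[OF g m(1,2)] by blast
  then show ?case using thru_transfer[OF g] by simp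
next
  case (Prv t a)
  have w: "wfT s t" "wfP s a" using Prv.prems by auto
  have "\<And>\<beta>. \<beta> \<in> M \<Longrightarrow> (case evT (transport_env \<tau> \<rho>) (twist \<sigma> \<beta>) t of None \<Rightarrow> False
       | Some m \<Rightarrow> (\<exists>\<gamma>\<in>M. prec (twist \<sigma> \<beta>) \<gamma> \<and> length (hd \<gamma>) = m \<and> frc a (transport_env \<tau> \<rho>) \<gamma>))
     = (case evT \<rho> \<beta> t of None \<Rightarrow> False
       | Some m \<Rightarrow> (\<exists>\<gamma>\<in>M. prec \<beta> \<gamma> \<and> length (hd \<gamma>) = m \<and> frc a \<rho> \<gamma>))"
    using eval_transport(1)[OF g Prv.prems(2) _ w(1)] provability_transfer[OF g Prv.IH[OF w(2) Prv.prems(2)]]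
    by (simp split: option.splits)
  then show ?case using thru_transfer[OF g] by simp
qed

end

definition agree_on :: "'u env \<Rightarrow> 'u env \<Rightarrow> nat set \<Rightarrow> (kind \<times> nat \<times> nat) set \<Rightarrow> bool" where
  "agree_on \<rho> \<rho>' N F \<longleftrightarrow> (\<forall>i\<in>N. fst \<rho> i = fst \<rho>' i) \<and> (\<forall>k m i. (k, m, i) \<in> F \<longrightarrow> snd \<rho> k m i = snd \<rho>' k m i)"

(* Formulas have finitely many free functional variables, so sort(phi) bounds
   the types of all of them. *)
lemma finite_fvFT_fvFF: "finite (fvFT t)" "finite (fvFF Z)"
  by (induction t and Z) auto

lemma finite_fvF: "finite (fvF \<phi>)"
  by (induction \<phi>) (auto simp: finite_fvFT_fvFF)

lemma sortf_ge: "(k, m, i) \<in> fvF \<phi> \<Longrightarrow> m \<le> sortf \<phi>"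
  unfolding sortf_def
  by (rule Max_ge) (auto simp: finite_fvF intro!: image_eqI[where x="(k, m, i)"])

context beth begin

lemma updF_snd: "snd (updF \<rho> k m i c) k' m' i' = (if (k', m', i') = (k, m, i) then c else snd \<rho> k' m' i')"
  by (auto simp: updF_def)
lemma updF_fst[simp]: "fst (updF \<rho> k m i c) = fst \<rho>" by (simp add: updF_def)
lemma updN_snd[simp]: "snd (updN \<rho> i c) = snd \<rho>" by (simp add: updN_def)
lemma updN_fst: "fst (updN \<rho> i c) = (fst \<rho>)(i := c)" by (simp add: updN_def)

lemma env_eqI: "fst \<rho> = fst \<rho>' \<Longrightarrow> (\<And>k m i. snd \<rho> k m i = snd \<rho>' k m i) \<Longrightarrow> \<rho> = \<rho>'"
  by (metis prod_eqI ext)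

lemma updF_comm: "(k, m, i) \<noteq> (k', m', i') \<Longrightarrow> updF (updF \<rho> k m i c) k' m' i' d = updF (updF \<rho> k' m' i' d) k m i c"
  by (rule env_eqI) (auto simp: updF_snd)
lemma updF_over: "updF (updF \<rho> k m i c) k m i d = updF \<rho> k m i d"
  by (rule env_eqI) (auto simp: updF_snd)
lemma updN_updF: "updN (updF \<rho> k m i c) j d = updF (updN \<rho> j d) k m i c"
  by (rule env_eqI) (auto simp: updF_snd updN_fst)

lemma agree_on_Un:
  "agree_on \<rho> \<rho>' (N \<union> N') (F \<union> F') \<longleftrightarrow> agree_on \<rho> \<rho>' N F \<and> agree_on \<rho> \<rho>' N' F'"
  unfolding agree_on_def by blast

lemma agree_on_updN: "agree_on \<rho> \<rho>' (N - {i}) F \<Longrightarrow> agree_on (updN \<rho> i c) (updN \<rho>' i c) N F"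
  by (auto simp: agree_on_def updN_fst)

lemma agree_on_updF:
  "agree_on \<rho> \<rho>' N (F - {(k, m, i)}) \<Longrightarrow> agree_on (updF \<rho> k m i c) (updF \<rho>' k m i c) N F"
  by (auto simp: agree_on_def updF_snd)

lemma eval_coincidence:
  "agree_on \<rho> \<rho>' (fvNT t) (fvFT t) \<Longrightarrow> evT \<rho> \<alpha> t = evT \<rho>' \<alpha> t"
  "agree_on \<rho> \<rho>' (fvNF Z) (fvFF Z) \<Longrightarrow> evF \<rho> \<alpha> Z = evF \<rho>' \<alpha> Z"
  by (induction t and Z) (simp_all add: agree_on_Un, auto simp: agree_on_def)

lemma forces_coincidence:
  "agree_on \<rho> \<rho>' (fvN \<phi>) (fvF \<phi>) \<Longrightarrow> frc \<phi> \<rho> \<alpha> = frc \<phi> \<rho>' \<alpha>"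
proof (induction \<phi> arbitrary: \<rho> \<rho>' \<alpha>)
  case (AllN i a)
  have agr: "agree_on (updN \<rho> i c) (updN \<rho>' i c) (fvN a) (fvF a)" for c
    using AllN.prems by (simp add: agree_on_updN)
  show ?case by (simp add: AllN.IH[OF agr])
next
  case (ExN i a)
  have agr: "agree_on (updN \<rho> i c) (updN \<rho>' i c) (fvN a) (fvF a)" for c
    using ExN.prems by (simp add: agree_on_updN)
  show ?case by (simp add: ExN.IH[OF agr])
next
  case (AllF k m i a)
  have agr: "agree_on (updF \<rho> k m i c) (updF \<rho>' k m i c) (fvN a) (fvF a)" for c
    using AllF.prems by (simp add: agree_on_updF)
  show ?case by (simp add: AllF.IH[OF agr])
next
  case (ExF k m i a)
  have agr: "agree_on (updF \<rho> k m i c) (updF \<rho>' k m i c) (fvN a) (fvF a)" for c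
    using ExF.prems by (simp add: agree_on_updF)
  show ?case by (simp add: ExF.IH[OF agr])
next
  case (Prv t a)
  then have "agree_on \<rho> \<rho>' (fvNT t) (fvFT t)" "agree_on \<rho> \<rho>' (fvN a) (fvF a)"
    by (simp_all add: agree_on_Un)
  then have "frc a \<rho> = frc a \<rho>'" "\<And>\<beta>. evT \<rho> \<beta> t = evT \<rho>' \<beta> t"
    using Prv.IH eval_coincidence(1) by (blast intro: ext)+
  then show ?case by (simp only: frc.simps)
qed (auto simp: agree_on_Un eval_coincidence)

(* Substituting one lawless variable for another of the same type acts on
   evaluation and forcing as the corresponding update of the environment; the
   new variable must not occur in phi, not even bound. *)
lemma ty_subst: "ty (substF nn h g Z) = ty Z"
  by (induction Z rule: fnl_induct) auto

lemma eval_subst: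
  "evT \<rho> \<alpha> (substT nn h g t) = evT (updF \<rho> Lls nn h (snd \<rho> Lls nn g)) \<alpha> t"
  "evF \<rho> \<alpha> (substF nn h g Z) = evF (updF \<rho> Lls nn h (snd \<rho> Lls nn g)) \<alpha> Z"
  by (induction t and Z) (auto simp: updF_snd ty_subst split: option.splits)

lemma subst_update_comm:
  assumes "(k, m, i) \<noteq> (Lls, nn, h)" "(k, m, i) \<noteq> (Lls, nn, g)"
  shows "updF (updF \<rho> k m i c) Lls nn h (snd (updF \<rho> k m i c) Lls nn g)
       = updF (updF \<rho> Lls nn h (snd \<rho> Lls nn g)) k m i c"
  using assms by (auto simp: updF_snd intro: updF_comm)

lemma forces_subst:
  "(Lls, nn, g) \<notin> allvF \<phi> \<Longrightarrow> frc (substL nn h g \<phi>) \<rho> \<alpha> = frc \<phi> (updF \<rho> Lls nn h (snd \<rho> Lls nn g)) \<alpha>"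
proof (induction \<phi> arbitrary: \<rho> \<alpha>)
  case (AllN i a) then show ?case by (simp add: updN_updF)
next
  case (ExN i a) then show ?case by (simp add: updN_updF)
next
  case (AllF k m i a)
  show ?case
  proof (cases "(k, m, i) = (Lls, nn, h)")
    case False
    have "(k, m, i) \<noteq> (Lls, nn, g)" "(Lls, nn, g) \<notin> allvF a" using AllF.prems by auto
    then have "\<And>c \<beta>. frc (substL nn h g a) (updF \<rho> k m i c) \<beta> = frc a (updF (updF \<rho> Lls nn h (snd \<rho> Lls nn g)) k m i c) \<beta>"
      using AllF.IH subst_update_comm[OF False] by metis
    moreover have "substL nn h g (AllF k m i a) = AllF k m i (substL nn h g a)" using False by auto
    ultimately show ?thesis by simp
  qed (auto simp: updF_over)
next
  case (ExF k m i a)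
  show ?case
  proof (cases "(k, m, i) = (Lls, nn, h)")
    case False
    have "(k, m, i) \<noteq> (Lls, nn, g)" "(Lls, nn, g) \<notin> allvF a" using ExF.prems by auto
    then have "\<And>c \<beta>. frc (substL nn h g a) (updF \<rho> k m i c) \<beta> = frc a (updF (updF \<rho> Lls nn h (snd \<rho> Lls nn g)) k m i c) \<beta>"
      using ExF.IH subst_update_comm[OF False] by metis
    moreover have "substL nn h g (ExF k m i a) = ExF k m i (substL nn h g a)" using False by auto
    ultimately show ?thesis by simp
  qed (auto simp: updF_over)
next
  case (Prv t a)
  have "(Lls, nn, g) \<notin> allvF a" using Prv.prems by simp
  then have "\<And>\<gamma>. frc (substL nn h g a) \<rho> \<gamma> = frc a (updF \<rho> Lls nn h (snd \<rho> Lls nn g)) \<gamma>"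
    by (rule Prv.IH)
  then have e1: "frc (substL nn h g a) \<rho> = frc a (updF \<rho> Lls nn h (snd \<rho> Lls nn g))"
    by (intro ext)
  show ?case by (simp only: substL.simps frc.simps e1 eval_subst)
qed (auto simp: eval_subst)

end

context beth_model begin

lemma thru_mono:
  assumes "\<alpha> \<in> M" "\<beta> \<in> M" "prec \<beta> \<alpha>" shows "thru \<beta> \<subseteq> thru \<alpha>"
proof
  fix P assume "P \<in> thru \<beta>"
  then have P: "is_path (DD (As (s - 1))) prec P" "\<beta> \<in> P" by (auto simp: thru_def M_As)
  have "\<alpha> \<in> P" using path_closed[OF As_ne P(1) P(2)] assms by (simp add: M_As)
  then show "P \<in> thru \<alpha>" using P by (simp add: thru_def M_As)
qed

lemma forces_mono:
  "\<alpha> \<in> M \<Longrightarrow> \<beta> \<in> M \<Longrightarrow> prec \<beta> \<alpha> \<Longrightarrow> frc \<phi> \<rho> \<alpha> \<Longrightarrow> frc \<phi> \<rho> \<beta>"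
proof (induction \<phi> arbitrary: \<rho> \<alpha> \<beta>)
  case (EqN t u) then show ?case using thru_mono[OF EqN.prems(1-3)] by auto
next
  case (EqF t u) then show ?case using thru_mono[OF EqF.prems(1-3)] by auto
next
  case (Dj a b) then show ?case using thru_mono[OF Dj.prems(1-3)] by (simp add: subset_iff)
next
  case (ExN i a) then show ?case using thru_mono[OF ExN.prems(1-3)] by (simp add: subset_iff)
next
  case (ExF k m i a) then show ?case using thru_mono[OF ExF.prems(1-3)] by (simp add: subset_iff)
next
  case (Prv t a) then show ?case using thru_mono[OF Prv.prems(1-3)] by (simp add: subset_iff)
next
  case (Im a b) then show ?case using prec_trans by simp blast
next
  case (Cj a b) then show ?case by simp
next
  case (AllN i a) then show ?case by simp
next
  case (AllF k m i a) then show ?case by simp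
qed simp

lemma path_through_exists:
  assumes "\<alpha> \<in> M" shows "\<exists>P. P \<in> thru \<alpha>"
proof -
  define F where "F = {Q. Q \<subseteq> M \<and> linset prec Q \<and> \<alpha> \<in> Q}"
  have "\<forall>C\<in>chains F. \<exists>U\<in>F. \<forall>X\<in>C. X \<subseteq> U"
  proof
    fix C assume C: "C \<in> chains F"
    define U where "U = insert \<alpha> (\<Union>C)"
    have CF: "C \<subseteq> F" and Cch: "\<And>X Y. X \<in> C \<Longrightarrow> Y \<in> C \<Longrightarrow> X \<subseteq> Y \<or> Y \<subseteq> X"
      using C unfolding chains_def chain_subset_def by blast+
    have aF: "{\<alpha>} \<in> F" using assms by (simp add: F_def linset_def prec_refl)
    define C' where "C' = insert {\<alpha>} C"
    have C'F: "C' \<subseteq> F" using CF aF by (simp add: C'_def)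
    have C'ch: "\<And>X Y. X \<in> C' \<Longrightarrow> Y \<in> C' \<Longrightarrow> X \<subseteq> Y \<or> Y \<subseteq> X"
    proof -
      fix X Y assume "X \<in> C'" "Y \<in> C'"
      moreover have "\<And>Z. Z \<in> C \<Longrightarrow> {\<alpha>} \<subseteq> Z" using CF by (auto simp: F_def)
      ultimately show "X \<subseteq> Y \<or> Y \<subseteq> X" using Cch unfolding C'_def by blast
    qed
    have U': "U = \<Union>C'" by (simp add: U_def C'_def)
    have "U \<subseteq> M" using C'F by (auto simp: U' F_def)
    moreover have "linset prec U" unfolding linset_def
    proof (intro ballI)
      fix x y assume "x \<in> U" "y \<in> U"
      then obtain X Y where XY: "X \<in> C'" "Y \<in> C'" "x \<in> X" "y \<in> Y" by (auto simp: U')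
      then have "X \<subseteq> Y \<or> Y \<subseteq> X" using C'ch by blast
      then obtain Z where Z: "Z \<in> C'" "x \<in> Z" "y \<in> Z" using XY by blast
      then have "Z \<in> F" using C'F by blast
      then show "prec x y \<or> prec y x" using Z by (auto simp: F_def linset_def)
    qed
    ultimately have "U \<in> F" by (simp add: F_def U_def)
    moreover have "\<forall>X\<in>C. X \<subseteq> U" by (auto simp: U_def)
    ultimately show "\<exists>U\<in>F. \<forall>X\<in>C. X \<subseteq> U" by blast
  qed
  then obtain P where P: "P \<in> F" "\<forall>X\<in>F. P \<subseteq> X \<longrightarrow> X = P" using Zorn_Lemma2 by blast
  have "is_path M prec P" unfolding is_path_def using P by (auto simp: F_def)
  then show ?thesis using P by (auto simp: thru_def F_def)
qed

(* Forcing the equation Z(y) = V(y) between functional variables of type nn: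
   on every path the two values at argument y become defined and equal (for
   nn = 1 the values are numbers, decoded injectively). *)
lemma forces_appEq:
  assumes n: "1 \<le> nn" "nn \<le> s" and u: "snd \<rho> k1 nn i1 = u" "u \<in> A nn" and v: "snd \<rho> k2 nn i2 = v" "v \<in> A nn"
    and c: "fst \<rho> y = c"
  shows "frc (appEq nn (FV k1 nn i1) (FV k2 nn i2) y) \<rho> \<beta> =
    (\<forall>P\<in>thru \<beta>. \<exists>\<gamma>\<in>P. dec u (take nn \<gamma>, c) \<noteq> None \<and> dec u (take nn \<gamma>, c) = dec v (take nn \<gamma>, c))"
proof (cases "nn = 1")
  case True
  have du: "dec u \<in> Raw (As 0)" "dec v \<in> Raw (As 0)" using A_dec(1)[OF n u(2)] A_dec(1)[OF n v(2)] True by auto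
  have inj: "\<And>a b. a \<in> range num \<Longrightarrow> b \<in> range num \<Longrightarrow> inv num a = inv num b \<Longrightarrow> a = b"
    by (metis f_inv_into_f)
  have "(map_option (inv num) (dec u (take 1 \<gamma>, c)) \<noteq> None \<and>
       map_option (inv num) (dec u (take 1 \<gamma>, c)) = map_option (inv num) (dec v (take 1 \<gamma>, c)))
     = (dec u (take 1 \<gamma>, c) \<noteq> None \<and> dec u (take 1 \<gamma>, c) = dec v (take 1 \<gamma>, c))" for \<gamma>
  proof (cases "dec u (take 1 \<gamma>, c)")
    case None then show ?thesis by simp
  next
    case (Some a)
    show ?thesis
    proof (cases "dec v (take 1 \<gamma>, c)")
      case None then show ?thesis using Some by simp
    next
      case (Some b)
      have "a \<in> last (As 0)" using RawD(2)[OF du(1)] \<open>dec u (take 1 \<gamma>, c) = Some a\<close> by blast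
      moreover have "b \<in> last (As 0)" using RawD(2)[OF du(2)] Some by blast
      ultimately have "a \<in> range num" "b \<in> range num" by (auto simp: last_As A0)
      then have "(inv num a = inv num b) = (a = b)" using inj by blast
      then show ?thesis using Some \<open>dec u (take 1 \<gamma>, c) = Some a\<close> by simp
    qed
  qed
  then show ?thesis using True u v c by (simp add: appEq_def)
next
  case False
  then have "ty (FV k1 nn i1) = nn" "\<not> nn = 1" by auto
  then show ?thesis using u v c by (simp add: appEq_def)
qed

lemma forces_lt_witness:
  assumes "z \<noteq> x" "z \<noteq> y" "\<beta> \<in> P" "fst \<rho> y < fst \<rho> x"
  shows "\<exists>\<beta>0\<in>P. \<exists>d. frc (EqN (Pl (NV y) (Sc (NV z))) (NV x)) (updN \<rho> z d) \<beta>0"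
proof -
  define d where "d = fst \<rho> x - fst \<rho> y - 1"
  have "frc (EqN (Pl (NV y) (Sc (NV z))) (NV x)) (updN \<rho> z d) \<beta>"
    using assms by (auto simp: updN_fst d_def thru_def)
  then show ?thesis using assms(3) by blast
qed

lemma forces_le_D:
  assumes "z \<noteq> x" "z \<noteq> y" "\<beta> \<in> M" "frc (ExN z (EqN (Pl (NV y) (NV z)) (NV x))) \<rho> \<beta>"
  shows "fst \<rho> y \<le> fst \<rho> x"
proof -
  obtain P where P: "P \<in> thru \<beta>" using path_through_exists[OF assms(3)] by blast
  have h: "\<forall>P\<in>thru \<beta>. \<exists>\<beta>0\<in>P. \<exists>d. frc (EqN (Pl (NV y) (NV z)) (NV x)) (updN \<rho> z d) \<beta>0"
    using assms(4) by (simp only: frc.simps(8))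
  obtain \<beta>0 d where "\<beta>0 \<in> P" "frc (EqN (Pl (NV y) (NV z)) (NV x)) (updN \<rho> z d) \<beta>0" using h P by blast
  moreover have "\<beta>0 \<in> M" using calculation(1) P by (auto simp: thru_def is_path_def)
  ultimately obtain P' where P': "P' \<in> thru \<beta>0" using path_through_exists by blast
  moreover have "\<forall>P\<in>thru \<beta>0. \<exists>\<beta>1\<in>P. evT (updN \<rho> z d) \<beta>1 (Pl (NV y) (NV z)) \<noteq> None \<and> evT (updN \<rho> z d) \<beta>1 (Pl (NV y) (NV z)) = evT (updN \<rho> z d) \<beta>1 (NV x)"
    using \<open>frc (EqN _ _) _ \<beta>0\<close> by (simp only: frc.simps(2))
  ultimately obtain \<beta>1 where "evT (updN \<rho> z d) \<beta>1 (Pl (NV y) (NV z)) = evT (updN \<rho> z d) \<beta>1 (NV x)"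
    by blast
  then show ?thesis using assms(1,2) by (auto simp: updN_fst)
qed

lemma forces_all_lt_D:
  assumes "x \<noteq> y" "\<beta> \<in> M" "frc (all_lt y x E) \<rho> \<beta>" "c < fst \<rho> x"
  shows "frc E (updN \<rho> y c) \<beta>"
proof -
  define z where "z = Suc (x + y)"
  have z: "z \<noteq> x" "z \<noteq> y" by (auto simp: z_def)
  have "frc (Im (ExN z (EqN (Pl (NV y) (Sc (NV z))) (NV x))) E) (updN \<rho> y c) \<beta>"
    using assms(3) by (simp add: all_lt_def z_def)
  moreover have "frc (ExN z (EqN (Pl (NV y) (Sc (NV z))) (NV x))) (updN \<rho> y c) \<beta>"
  proof (unfold frc.simps(8), intro ballI)
    fix P assume "P \<in> thru \<beta>"
    then have "\<beta> \<in> P" by (simp add: thru_def)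
    moreover have "fst (updN \<rho> y c) y < fst (updN \<rho> y c) x" using assms(1,4) by (simp add: updN_fst)
    ultimately show "\<exists>\<beta>0\<in>P. \<exists>d. frc (EqN (Pl (NV y) (Sc (NV z))) (NV x)) (updN (updN \<rho> y c) z d) \<beta>0"
      by (rule forces_lt_witness[OF z])
  qed
  ultimately show ?thesis using assms(2) prec_refl unfolding frc.simps(6) by blast
qed

lemma forces_all_le_I:
  assumes "x \<noteq> y" and E: "\<And>c \<beta>'. \<beta>' \<in> M \<Longrightarrow> prec \<beta>' \<beta> \<Longrightarrow> c \<le> fst \<rho> x \<Longrightarrow> frc E (updN \<rho> y c) \<beta>'"
  shows "frc (all_le y x E) \<rho> \<beta>"
proof -
  define z where "z = Suc (x + y)"
  have z: "z \<noteq> x" "z \<noteq> y" by (auto simp: z_def)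
  have "frc E (updN \<rho> y c) \<beta>'"
    if "\<beta>' \<in> M" "prec \<beta>' \<beta>" "frc (ExN z (EqN (Pl (NV y) (NV z)) (NV x))) (updN \<rho> y c) \<beta>'" for c \<beta>'
    using forces_le_D[OF z that(1,3)] E[OF that(1,2)] assms(1) by (simp add: updN_fst)
  then show ?thesis by (simp add: all_le_def z_def)
qed

lemma forces_LL2: "frc (LL2 nn i j) \<rho> root"
proof -
  have "\<forall>P\<in>thru root. \<exists>\<beta>\<in>P. frc (EqF (FV Lls nn i) (FV Lls nn j)) \<rho> \<beta> \<or> frc (Ng (EqF (FV Lls nn i) (FV Lls nn j))) \<rho> \<beta>"
  proof
    fix P assume P: "P \<in> thru root"
    show "\<exists>\<beta>\<in>P. frc (EqF (FV Lls nn i) (FV Lls nn j)) \<rho> \<beta> \<or> frc (Ng (EqF (FV Lls nn i) (FV Lls nn j))) \<rho> \<beta>"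
    proof (cases "snd \<rho> Lls nn i = snd \<rho> Lls nn j")
      case True
      then have "frc (EqF (FV Lls nn i) (FV Lls nn j)) \<rho> root" by (auto simp: thru_def)
      then show ?thesis using P by (auto simp: thru_def)
    next
      case False
      have "frc (Ng (EqF (FV Lls nn i) (FV Lls nn j))) \<rho> root"
      proof -
        have "\<And>\<beta>. \<beta> \<in> M \<Longrightarrow> \<not> frc (EqF (FV Lls nn i) (FV Lls nn j)) \<rho> \<beta>"
        proof
          fix \<beta> assume "\<beta> \<in> M" "frc (EqF (FV Lls nn i) (FV Lls nn j)) \<rho> \<beta>"
          moreover obtain P' where "P' \<in> thru \<beta>" using path_through_exists calculation by blast
          ultimately show False using False by auto
        qed
        then show ?thesis by (auto simp: Ng_def)
      qed
      then show ?thesis using P by (auto simp: thru_def)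
    qed
  qed
  then show ?thesis by (simp add: LL2_def)
qed

end

(* relabel S a b: the family b_y^{-1} o a_y of self-maps of S (identity outside S).
   For bijection families a, b of S it inverts relabel S b a. *)
definition relabel :: "'a set \<Rightarrow> (nat \<Rightarrow> 'a \<Rightarrow> 'a) \<Rightarrow> (nat \<Rightarrow> 'a \<Rightarrow> 'a) \<Rightarrow> nat \<Rightarrow> 'a \<Rightarrow> 'a" where
  "relabel S a b y e = (if e \<in> S then inv_into S (b y) (a y e) else e)"

lemma relabel_cancel:
  assumes "bij_betw (a y) S S" "bij_betw (b y) S S" "e \<in> S"
  shows "relabel S a b y e \<in> S" "b y (relabel S a b y e) = a y e"
proof -
  have "a y e \<in> b y ` S" using assms by (auto simp: bij_betw_def)
  then show "relabel S a b y e \<in> S" "b y (relabel S a b y e) = a y e"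
    using assms(3) by (simp_all add: relabel_def inv_into_into f_inv_into_f)
qed

lemma relabel_inv:
  assumes "bij_betw (a y) S S" "bij_betw (b y) S S"
  shows "relabel S b a y (relabel S a b y e) = e"
proof (cases "e \<in> S")
  case True
  have r: "relabel S a b y e \<in> S" "b y (relabel S a b y e) = a y e"
    using relabel_cancel[where a=a and b=b] assms True by blast+
  then have "relabel S b a y (relabel S a b y e) = inv_into S (a y) (a y e)"
    by (simp add: relabel_def)
  also have "\<dots> = e" using True assms(1) by (simp add: bij_betw_def inv_into_f_f)
  finally show ?thesis .
qed (simp add: relabel_def)

context beth_model begin

lemma nu_cong:
  assumes "\<And>m e. e \<in> A k \<Longrightarrow> \<xi> m e = \<xi>' m e"
  shows "nu k \<xi> = nu k \<xi>'"
proof (intro ext, clarify)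
  fix x m
  show "nu k \<xi> (x, m) = nu k \<xi>' (x, m)"
  proof (cases "x \<in> DD (As k) \<and> m < lh x")
    case True
    then have "last x ! m \<in> A k" using node_entry_A[of x k k m] last_node[of x k] by simp
    then show ?thesis using assms True by (simp add: nu_def lh_def)
  qed (auto simp: nu_def lh_def)
qed

end

context beth_level begin

lemma relabel_inv_pair:
  assumes "\<forall>m. bij_betw (a m) (A (n - 1)) (A (n - 1))" "\<forall>m. bij_betw (b m) (A (n - 1)) (A (n - 1))"
  shows "inv_pair (relabel (A (n - 1)) a b) (relabel (A (n - 1)) b a)"
  unfolding inv_pair_def
proof (intro conjI allI ballI)
  fix y e
  show "relabel (A (n - 1)) b a y (relabel (A (n - 1)) a b y e) = e"
    using relabel_inv[where a=a and b=b] assms by blast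
  show "relabel (A (n - 1)) a b y (relabel (A (n - 1)) b a y e) = e"
    using relabel_inv[where a=b and b=a] assms by blast
next
  fix y e assume "e \<in> A (n - 1)"
  then show "relabel (A (n - 1)) a b y e \<in> A (n - 1)" "relabel (A (n - 1)) b a y e \<in> A (n - 1)"
    using relabel_cancel(1)[where a=a and b=b] relabel_cancel(1)[where a=b and b=a] assms by blast+
qed

lemma transport_nu_swap:
  assumes xi: "\<forall>m. bij_betw (\<xi> m) (A (n - 1)) (A (n - 1))" and ze: "\<forall>m. bij_betw (\<zeta> m) (A (n - 1)) (A (n - 1))"
    and dH: "dec H = nu (n - 1) \<xi>"
  shows "transport (relabel (A (n - 1)) \<zeta> \<xi>) n H = enc (nu (n - 1) \<zeta>)"
proof -
  have g: "inv_pair (relabel (A (n - 1)) \<xi> \<zeta>) (relabel (A (n - 1)) \<zeta> \<xi>)" using relabel_inv_pair[OF xi ze] .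
  have "\<xi> m (relabel (A (n - 1)) \<zeta> \<xi> m e) = \<zeta> m e" if "e \<in> A (n - 1)" for m e
    using relabel_cancel(2)[where a=\<zeta> and b=\<xi>] xi ze that by blast
  then have "nu (n - 1) (\<lambda>m e. \<xi> m (relabel (A (n - 1)) \<zeta> \<xi> m e)) = nu (n - 1) \<zeta>"
    by (intro nu_cong)
  moreover have "(\<lambda>(x, m). nu (n - 1) \<xi> (twist (relabel (A (n - 1)) \<zeta> \<xi>) x, m))
      = nu (n - 1) (\<lambda>m e. \<xi> m (relabel (A (n - 1)) \<zeta> \<xi> m e))"
    by (rule ext) (simp add: nu_twist[OF g, simplified] split: prod.splits)
  ultimately have "(\<lambda>(x, m). nu (n - 1) \<xi> (twist (relabel (A (n - 1)) \<zeta> \<xi>) x, m)) = nu (n - 1) \<zeta>"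
    by simp
  then show ?thesis using transport_n dH by simp
qed

(* If H = nu(xi) and G = nu(zeta) are forced to agree at argument c at an
   extension beta' of beta, with c < lh beta, then xi_c and zeta_c agree on the
   c-th entry of the n-th coordinate of beta: some node on a path through beta'
   already makes the values defined and equal, and entries below lh beta are
   shared by all nodes comparable with beta. *)
lemma nu_agree_of_forced_eq:
  assumes G: "G \<in> L n" "dec G = nu (n - 1) \<zeta>" and H: "H \<in> L n" "dec H = nu (n - 1) \<xi>"
    and \<rho>: "snd \<rho> Lls n g = G" "snd \<rho> Lls n h = H" "fst \<rho> y = c"
    and b: "\<beta> \<in> M" "\<beta>' \<in> M" "prec \<beta>' \<beta>" "c < lh \<beta>"
    and E: "frc (appEq n (FV Lls n g) (FV Lls n h) y) \<rho> \<beta>'"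
  shows "\<zeta> c (\<beta> ! (n - 1) ! c) = \<xi> c (\<beta> ! (n - 1) ! c)"
proof -
  have nr: "1 \<le> n" "n \<le> s" and i: "n - 1 \<le> s - 1" using n_pos n_le_s by auto
  have GA: "G \<in> A n" "H \<in> A n" using G H L_A nr by auto
  obtain P where P: "P \<in> thru \<beta>'" using path_through_exists[OF b(2)] by blast
  then obtain \<gamma> where gam: "\<gamma> \<in> P" "dec G (take n \<gamma>, c) \<noteq> None" "dec G (take n \<gamma>, c) = dec H (take n \<gamma>, c)"
    using E forces_appEq[OF nr \<rho>(1) GA(1) \<rho>(2) GA(2) \<rho>(3)] by blast
  have pP: "is_path M prec P" "\<beta>' \<in> P" using P by (auto simp: thru_def)
  have gM: "\<gamma> \<in> M" using gam(1) pP(1) path_sub by blast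
  have cg: "c < lh \<gamma>" and eqg: "\<zeta> c (\<gamma> ! (n - 1) ! c) = \<xi> c (\<gamma> ! (n - 1) ! c)"
    using gam(2,3) nu_at[OF gM nr, of \<zeta> c] nu_at[OF gM nr, of \<xi> c] G(2) H(2) by (auto split: if_splits)
  have cb': "c < lh \<beta>'" using b prec_lh[OF As_ne] by (fastforce simp: M_As)
  have "\<gamma> ! (n - 1) ! c = \<beta>' ! (n - 1) ! c"
    using path_lin[OF pP(1) gam(1) pP(2)] node_entry[OF _ _ _ i] gM b(2) cb' cg by (metis M_As)
  moreover have "\<beta>' ! (n - 1) ! c = \<beta> ! (n - 1) ! c"
    using node_entry[OF _ _ b(3) i b(4)] b(1,2) by (simp add: M_As)
  ultimately show ?thesis using eqg by simp
qed

lemma relabel_fixes_node: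
  assumes ze: "\<forall>m. bij_betw (\<zeta> m) (A (n - 1)) (A (n - 1))" and b: "\<beta> \<in> M"
    and agree: "\<And>c. c < lh \<beta> \<Longrightarrow> \<zeta> c (\<beta> ! (n - 1) ! c) = \<xi> c (\<beta> ! (n - 1) ! c)"
  shows "twist (relabel (A (n - 1)) \<xi> \<zeta>) \<beta> = \<beta>"
proof (rule twist_fix[OF b])
  fix c assume c: "c < lh \<beta>"
  have "\<beta> ! (n - 1) ! c \<in> A (n - 1)"
    using node_entry_A[of \<beta> "s - 1" "n - 1" c] b c n_le_s by (simp add: M_As)
  moreover have "inj_on (\<zeta> c) (A (n - 1))" using ze by (simp add: bij_betw_def)
  ultimately show "relabel (A (n - 1)) \<xi> \<zeta> c (\<beta> ! (n - 1) ! c) = \<beta> ! (n - 1) ! c"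
    using agree[OF c, symmetric] by (simp add: relabel_def inv_into_f_f)
qed

(* On the free variables of phi, the environment transported along a relabelling
   that maps H to G agrees with the environment where H is replaced by G:
   functionals of type < n are untouched, lawlike ones of type n are fixed, and
   H is the only other free variable of type n. *)
lemma transport_env_agree:
  assumes g: "inv_pair \<sigma> \<tau>" and e: "envOK \<rho>"
    and fvm: "\<And>k m i. (k, m, i) \<in> fvF \<phi> \<Longrightarrow> m \<le> n"
    and fv: "\<forall>(k, m, i) \<in> fvF \<phi>. m = n \<and> k \<noteq> Law \<longrightarrow> k = Lls \<and> i = h"
    and nog: "(Lls, n, g) \<notin> fvF \<phi>"
    and tH: "transport \<tau> n (snd \<rho> Lls n h) = G"
  shows "agree_on (transport_env \<tau> \<rho>) (updF (updF \<rho> Lls n g G) Lls n h G) (fvN \<phi>) (fvF \<phi>)"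
  unfolding agree_on_def
proof (intro conjI ballI allI impI)
  fix k m i assume kmi: "(k, m, i) \<in> fvF \<phi>"
  have r: "snd (updF (updF \<rho> Lls n g G) Lls n h G) k m i = (if (k, m, i) = (Lls, n, h) then G else snd \<rho> k m i)"
    using kmi nog by (auto simp: updF_snd)
  show "snd (transport_env \<tau> \<rho>) k m i = snd (updF (updF \<rho> Lls n g G) Lls n h G) k m i"
  proof (cases "m < n")
    case True
    then show ?thesis using r transport_low by simp
  next
    case False
    then have m: "m = n" using fvm[OF kmi] by simp
    show ?thesis
    proof (cases "k = Law")
      case True
      then have "snd \<rho> Law n i \<in> B n" using e n_pos n_le_s unfolding envOK_def by (metis Dom.simps(2))
      then show ?thesis using transport_Bn[OF g] r True m by simp
    next
      case False
      then show ?thesis using fv kmi m r tH by auto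
    qed
  qed
qed simp

(* LL3 at a node beta forcing phi(H), with x := lh beta: every lawless G that is
   forced to agree with H below x at an extension beta' forces phi(G) there.
   Transport along the relabelling exchanging H and G fixes beta, so phi holds at
   beta with H replaced by G (invariance + coincidence), hence at beta'
   (monotonicity), and this is phi(G) (substitution). *)
lemma LL3_at_node:
  assumes wf: "wfP s \<phi>" and so: "sortf \<phi> \<le> n"
    and fv: "\<forall>(k, m, i) \<in> fvF \<phi>. m = n \<and> k \<noteq> Law \<longrightarrow> k = Lls \<and> i = h"
    and gh: "g \<noteq> h" and ga: "(Lls, n, g) \<notin> allvF \<phi>" and xy: "x \<noteq> y" and xf: "x \<notin> fvN \<phi>"
    and e: "envOK \<rho>" and b: "\<beta> \<in> M" "frc \<phi> \<rho> \<beta>"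
  shows "frc (AllF Lls n g (Im (all_lt y x (appEq n (FV Lls n g) (FV Lls n h) y)) (substL n h g \<phi>)))
           (updN \<rho> x (lh \<beta>)) \<beta>"
proof -
  define \<rho>x where "\<rho>x = updN \<rho> x (lh \<beta>)"
  have nr: "1 \<le> n" "n \<le> s" using n_pos n_le_s by auto
  have ex: "envOK \<rho>x" using envOK_updN[OF e] by (simp add: \<rho>x_def)
  have H: "snd \<rho>x Lls n h \<in> L n" using ex nr unfolding envOK_def by (metis Dom.simps(3))
  obtain \<xi> where xi: "\<forall>m. bij_betw (\<xi> m) (A (n - 1)) (A (n - 1))" "dec (snd \<rho>x Lls n h) = nu (n - 1) \<xi>"
    using L_elim[OF nr H] by blast
  have "agree_on \<rho>x \<rho> (fvN \<phi>) (fvF \<phi>)" using xf by (auto simp: agree_on_def \<rho>x_def updN_fst)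
  then have fx: "frc \<phi> \<rho>x \<beta>" using b(2) forces_coincidence by blast
  have "frc (substL n h g \<phi>) (updF \<rho>x Lls n g G) \<beta>'"
    if G: "G \<in> L n" and b': "\<beta>' \<in> M" "prec \<beta>' \<beta>"
      and ant: "frc (all_lt y x (appEq n (FV Lls n g) (FV Lls n h) y)) (updF \<rho>x Lls n g G) \<beta>'" for G \<beta>'
  proof -
    obtain \<zeta> where ze: "\<forall>m. bij_betw (\<zeta> m) (A (n - 1)) (A (n - 1))" "G = enc (nu (n - 1) \<zeta>)" "dec G = nu (n - 1) \<zeta>"
      using L_elim[OF nr G] by blast
    define \<sigma> where "\<sigma> = relabel (A (n - 1)) \<xi> \<zeta>"
    define \<tau> where "\<tau> = relabel (A (n - 1)) \<zeta> \<xi>"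
    have g: "inv_pair \<sigma> \<tau>" unfolding \<sigma>_def \<tau>_def by (rule relabel_inv_pair[OF xi(1) ze(1)])
    have "\<zeta> c (\<beta> ! (n - 1) ! c) = \<xi> c (\<beta> ! (n - 1) ! c)" if c: "c < lh \<beta>" for c
    proof (rule nu_agree_of_forced_eq[OF G ze(3) H xi(2) _ _ _ b(1) b' c])
      show "frc (appEq n (FV Lls n g) (FV Lls n h) y) (updN (updF \<rho>x Lls n g G) y c) \<beta>'"
        using forces_all_lt_D[OF xy b'(1) ant] c xy by (simp add: \<rho>x_def updN_fst)
    qed (use gh xy in \<open>auto simp: updF_snd updN_fst\<close>)
    then have fixed: "twist \<sigma> \<beta> = \<beta>" unfolding \<sigma>_def using relabel_fixes_node[OF ze(1) b(1)] by blast
    have "transport \<tau> n (snd \<rho>x Lls n h) = G"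
      unfolding \<tau>_def using transport_nu_swap[OF xi(1) ze(1) xi(2)] ze(2) by simp
    moreover have "(Lls, n, g) \<notin> fvF \<phi>" using ga fvF_allvF by blast
    moreover have "\<And>k m i. (k, m, i) \<in> fvF \<phi> \<Longrightarrow> m \<le> n" using sortf_ge so by (meson le_trans)
    ultimately have "agree_on (transport_env \<tau> \<rho>x) (updF (updF \<rho>x Lls n g G) Lls n h G) (fvN \<phi>) (fvF \<phi>)"
      using transport_env_agree[OF g ex _ fv] by blast
    moreover have "frc \<phi> (transport_env \<tau> \<rho>x) \<beta>" using forces_transport[OF g wf ex b(1)] fixed fx by simp
    ultimately have "frc \<phi> (updF (updF \<rho>x Lls n g G) Lls n h G) \<beta>'"
      using forces_coincidence forces_mono b(1) b' by blast
    then show ?thesis using forces_subst[OF ga] by (simp add: updF_snd)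
  qed
  then show ?thesis by (simp add: \<rho>x_def)
qed

lemma forces_LL3:
  assumes "wfP s \<phi>" "sortf \<phi> \<le> n" "\<forall>(k, m, i) \<in> fvF \<phi>. m = n \<and> k \<noteq> Law \<longrightarrow> k = Lls \<and> i = h"
    "g \<noteq> h" "(Lls, n, g) \<notin> allvF \<phi>" "x \<noteq> y" "x \<notin> fvN \<phi>" and e: "envOK \<rho>"
  shows "frc (LL3 n \<phi> h g x y) \<rho> root"
proof -
  have "frc (ExN x (AllF Lls n g (Im (all_lt y x (appEq n (FV Lls n g) (FV Lls n h) y)) (substL n h g \<phi>)))) \<rho> \<beta>"
    if b: "\<beta> \<in> M" "frc \<phi> \<rho> \<beta>" for \<beta>
    using LL3_at_node[OF assms b] by (auto simp: thru_def)
  then show ?thesis by (simp add: LL3_def)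
qed

end

context beth_model begin

(* Along every path, a functional of type k is eventually defined at all
   arguments <= N, at a node of level > N: combine, by a common extension on
   the path, nodes witnessing definedness at each y <= N and a node of level N+1. *)
lemma path_defined_upto:
  assumes k: "1 \<le> k" "k \<le> s" and f: "f \<in> Raw (As (k - 1))" and P: "is_path M prec P"
  shows "\<exists>\<beta>\<in>P. N < lh \<beta> \<and> (\<forall>y\<le>N. f (take k \<beta>, y) \<noteq> None)"
proof -
  have PM: "P \<subseteq> M" using P path_sub by blast
  have i: "Suc (k - 1) = k" "k - 1 \<le> s - 1" using k by auto
  have Pk: "is_path (DD (As (k - 1))) prec (take k ` P)"
    using proj_path[OF P[unfolded M_As] i(2)] i(1) by simp
  have "\<forall>y. \<exists>e\<in>P. f (take k e, y) \<noteq> None"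
    using RawD(4)[OF f Pk] by blast
  then obtain e where e: "\<And>y. e y \<in> P" "\<And>y. f (take k (e y), y) \<noteq> None" by metis
  obtain l where l: "l \<in> P" "lh l = Suc N" using path_lh_As P by (metis M_As)
  obtain \<beta> where \<beta>: "\<beta> \<in> P" "\<forall>e'\<in>insert l (e ` {..N}). prec \<beta> e'"
    using path_lower_bound[OF P, of "insert l (e ` {..N})"] e(1) l(1) by blast
  have "lh l \<le> lh \<beta>" using prec_lh[OF As_ne] \<beta> l PM by (fastforce simp: M_As)
  moreover have "f (take k \<beta>, y) \<noteq> None" if "y \<le> N" for y
  proof -
    obtain v where v: "f (take k (e y), y) = Some v" using e(2) by blast
    have "prec \<beta> (e y)" using \<beta>(2) that by blast
    then show ?thesis
      using RawD(3)[OF f take_M(1)[OF _ k] take_M(1)[OF _ k] take_prec v] e(1) \<beta>(1) PM by blast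
  qed
  ultimately have "N < lh \<beta>" "\<forall>y\<le>N. f (take k \<beta>, y) \<noteq> None" using l(2) by auto
  then show ?thesis using \<beta>(1) by blast
qed

(* Lawless functionals can realise any finite initial segment beyond a node:
   take xi_y to be the transposition exchanging the y-th entry of beta with the
   prescribed value v_y. *)
lemma lawless_extension:
  assumes k: "1 \<le> k" "k \<le> s" and b: "\<beta> \<in> M" "X < lh \<beta>" and v: "\<And>y. y \<le> X \<Longrightarrow> v y \<in> A (k - 1)"
  obtains c where "c \<in> L k"
    "\<And>\<beta>' y. \<beta>' \<in> M \<Longrightarrow> prec \<beta>' \<beta> \<Longrightarrow> y \<le> X \<Longrightarrow> dec c (take k \<beta>', y) = Some (v y)"
proof -
  have i: "k - 1 \<le> s - 1" using k by simp
  have eA: "\<beta> ! (k - 1) ! y \<in> A (k - 1)" if "y \<le> X" for y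
    using node_entry_A[of \<beta> "s - 1" "k - 1" y] b that i by (simp add: M_As)
  define \<xi> where "\<xi> y = (if y \<le> X then transpose (\<beta> ! (k - 1) ! y) (v y) else id)" for y
  have xi: "\<forall>m. bij_betw (\<xi> m) (A (k - 1)) (A (k - 1))"
    using eA v by (simp add: \<xi>_def)
  have dc: "dec (enc (nu (k - 1) \<xi>)) = nu (k - 1) \<xi>"
    using dec_enc LRaw_Univ[OF k] xi by (auto simp: LRaw_nu)
  have "dec (enc (nu (k - 1) \<xi>)) (take k \<beta>', y) = Some (v y)"
    if b': "\<beta>' \<in> M" "prec \<beta>' \<beta>" and y: "y \<le> X" for \<beta>' y
  proof -
    have "\<beta>' ! (k - 1) ! y = \<beta> ! (k - 1) ! y"
      using node_entry[of \<beta> "s - 1" \<beta>' "k - 1" y] b b' y i by (simp add: M_As)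
    moreover have "y < lh \<beta>'" using prec_lh[OF As_ne] b b' y by (fastforce simp: M_As)
    ultimately show ?thesis using nu_at[OF b'(1) k, of \<xi> y] dc y by (simp add: \<xi>_def)
  qed
  then show ?thesis using that nu_L[OF k(1) xi] by blast
qed

end

context beth_level begin

(* LL1: on every path through the root some node beta already determines
   F(0), ..., F(X), where X is the value of x; a lawless functional realising these
   values beyond beta witnesses the existential at beta. *)
lemma forces_LL1:
  assumes xy: "x \<noteq> y" and e: "envOK \<rho>"
  shows "frc (LL1 n x y i j) \<rho> root"
proof -
  have nr: "1 \<le> n" "n \<le> s" using n_pos n_le_s by auto
  define u where "u = snd \<rho> Gen n i"
  have uA: "u \<in> A n" using e nr unfolding envOK_def u_def by (metis Dom.simps(1))
  have f: "dec u \<in> Raw (As (n - 1))" using A_dec(1)[OF nr uA] .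
  define E where "E = appEq n (FV Lls n j) (FV Gen n i) y"
  have "\<exists>\<beta>\<in>P. \<exists>c\<in>L n. frc (all_le y x E) (updF \<rho> Lls n j c) \<beta>" if P: "P \<in> thru root" for P
  proof -
    have pP: "is_path M prec P" using P by (simp add: thru_def)
    obtain \<beta> where b: "\<beta> \<in> P" "fst \<rho> x < lh \<beta>" "\<forall>y'\<le>fst \<rho> x. dec u (take n \<beta>, y') \<noteq> None"
      using path_defined_upto[OF nr f pP] by blast
    have bM: "\<beta> \<in> M" using b(1) pP path_sub by blast
    define v where "v y' = the (dec u (take n \<beta>, y'))" for y'
    have dv: "dec u (take n \<beta>', y') = Some (v y')" if "\<beta>' \<in> M" "prec \<beta>' \<beta>" "y' \<le> fst \<rho> x" for \<beta>' y'
      using RawD(3)[OF f take_M(1)[OF bM nr] take_M(1)[OF that(1) nr] take_prec[OF that(2)]] b(3) that(3)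
      by (auto simp: v_def)
    have "v y' \<in> A (n - 1)" if "y' \<le> fst \<rho> x" for y'
      using RawD(2)[OF f dv[OF bM prec_refl that]] by (simp add: last_As)
    then obtain c where c: "c \<in> L n"
      "\<And>\<beta>' y'. \<beta>' \<in> M \<Longrightarrow> prec \<beta>' \<beta> \<Longrightarrow> y' \<le> fst \<rho> x \<Longrightarrow> dec c (take n \<beta>', y') = Some (v y')"
      using lawless_extension[OF nr bM b(2)] by blast
    have cA: "c \<in> A n" using c(1) L_A nr by auto
    have "frc (all_le y x E) (updF \<rho> Lls n j c) \<beta>"
    proof (rule forces_all_le_I[OF xy])
      fix cy \<beta>' assume b': "\<beta>' \<in> M" "prec \<beta>' \<beta>" and cy: "cy \<le> fst (updF \<rho> Lls n j c) x"
      have cy': "cy \<le> fst \<rho> x" using cy by simp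
      have "dec c (take n \<beta>', cy) \<noteq> None \<and> dec c (take n \<beta>', cy) = dec u (take n \<beta>', cy)"
        using c(2)[OF b' cy'] dv[OF b' cy'] by simp
      then have "\<forall>P'\<in>thru \<beta>'. \<exists>\<gamma>\<in>P'. dec c (take n \<gamma>, cy) \<noteq> None \<and> dec c (take n \<gamma>, cy) = dec u (take n \<gamma>, cy)"
        by (auto simp: thru_def)
      moreover have "snd (updN (updF \<rho> Lls n j c) y cy) Lls n j = c"
        "snd (updN (updF \<rho> Lls n j c) y cy) Gen n i = u" "fst (updN (updF \<rho> Lls n j c) y cy) y = cy"
        by (simp_all add: updF_snd updN_fst u_def)
      ultimately show "frc E (updN (updF \<rho> Lls n j c) y cy) \<beta>'"
        using forces_appEq[OF nr _ cA _ uA] by (simp add: E_def)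
    qed
    then show ?thesis using b(1) c(1) by blast
  qed
  then show ?thesis by (simp add: LL1_def E_def)
qed

end

(* Main theorem: for each type 1 <= n <= s, the model forces the universal
   closures of LL1, LL2 and LL3 at its root. *)
theorem theorem8p1:
  fixes num :: "nat \<Rightarrow> 'u"
    and enc :: "('u list list \<times> nat \<Rightarrow> 'u option) \<Rightarrow> 'u"
    and s :: nat
  assumes "1 \<le> s"
    and "inj num"
    and "inj_on enc (beth.Univ num enc s)"
  shows "\<forall>n. 1 \<le> n \<and> n \<le> s \<longrightarrow>
      (\<forall>x y i j. x \<noteq> y \<longrightarrow> beth.forces_closure num enc s (LL1 n x y i j))
    \<and> (\<forall>i j. beth.forces_closure num enc s (LL2 n i j))
    \<and> (\<forall>\<phi> h g x y.
          wfP s \<phi> \<and> sortf \<phi> \<le> n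
        \<and> (\<forall>(k, m, i) \<in> fvF \<phi>. m = n \<and> k \<noteq> Law \<longrightarrow> k = Lls \<and> i = h)
        \<and> g \<noteq> h \<and> (Lls, n, g) \<notin> allvF \<phi> \<and> x \<noteq> y \<and> x \<notin> fvN \<phi>
        \<longrightarrow> beth.forces_closure num enc s (LL3 n \<phi> h g x y))"
proof (intro allI impI conjI)
  interpret beth_model num enc s by unfold_locales (use assms in auto)
  fix n assume "1 \<le> n \<and> n \<le> s"
  then interpret lvl: beth_level num enc s n by unfold_locales auto
  show "forces_closure (LL1 n x y i j)" if "x \<noteq> y" for x y i j
    using lvl.forces_LL1[OF that] by (simp add: forces_closure_def)
  show "forces_closure (LL2 n i j)" for i j
    using forces_LL2 by (simp add: forces_closure_def)
  show "forces_closure (LL3 n \<phi> h g x y)"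
    if "wfP s \<phi> \<and> sortf \<phi> \<le> n \<and> (\<forall>(k, m, i) \<in> fvF \<phi>. m = n \<and> k \<noteq> Law \<longrightarrow> k = Lls \<and> i = h)
      \<and> g \<noteq> h \<and> (Lls, n, g) \<notin> allvF \<phi> \<and> x \<noteq> y \<and> x \<notin> fvN \<phi>" for \<phi> h g x y
    using lvl.forces_LL3 that by (simp add: forces_closure_def)
qed

end
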